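(* For all integers $t\ge2$, $x\ge0$, $l\ge1$, $k\ge0$, $$f(t,x,l,k)=\sum_{k'=1}^{k}\binom{k}{k'}\,\tilde f(t,x,l,k')\,g(t-2,x+l,k-k',x).$$
   Context: Fix a positive integer $\omega$; all graphs counted are labeled, connected, chordal and $\omega$-colorable (proper coloring with at most $\omega$ colors). $[n]=\{1,\dots,n\}$, $[0]=\emptyset$, $[a,b]=\{a,\dots,b\}$. A vertex is simplicial if its neighborhood is a clique. For a chordal graph $G$ and a clique $X\subseteq V(G)$, the evaporation sequence of $G$ with exception set $X$ is: empty if $X=V(G)$; otherwise $L_1$ (the set of simplicial vertices of $G$ not in $X$, always nonempty) followed by the evaporation sequence of $G-L_1$ with exception set $X$. If it is $L_1,\dots,L_t$, $G$ evaporates at time $t$ and $L_G(X):=L_t$; a nonempty $S\subseteq V(G)\setminus X$ evaporates at time $\max\{i:L_i\cap S\ne\emptyset\}$. For a clique $Y=[y]$ ($y\ge1$) and $0\le z<y$: $g(s,y,k,z)$ is the number of connected $\omega$-colorable chordal graphs $G$ with vertex set $[y+k]$ in which $Y$ is a clique, $G$ evaporates at time at most $s$ with exception set $Y$, and every connected component of $G\setminus Y$ has a neighbor in $Y\setminus[z]$. With $X=[x]$: $f(t,x,l,k)$ is the number of connected $\omega$-colorable chordal graphs $G$ with vertex set $[x+l+k]$ in which $X$ is a clique, $G$ evaporates at time exactly $t$ with exception set $X$, $G\setminus X$ is connected, $L_G(X)=[x+1,x+l]$, and $X\cup L_G(X)$ is a clique. $\tilde f(t,x,l,k)$ is the number of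 graphs counted by $f(t,x,l,k)$ that additionally satisfy: $X\cup L_G(X)\subsetneq V(G)$ and every connected component of $G\setminus(X\cup L_G(X))$ evaporates at time exactly $t-1$ in $G$ with exception set $X$. *)

theory Defs
  imports Main
begin

text \<open>Simple labeled graphs: an edge set E of 2-element subsets; vertex set given separately.\<close>

definition all_edges :: "nat \<Rightarrow> nat set set" where
  "all_edges n = {e. \<exists>u v. e = {u, v} \<and> u \<noteq> v \<and> u \<in> {1..n} \<and> v \<in> {1..n}}"

definition adj :: "nat set set \<Rightarrow> nat \<Rightarrow> nat \<Rightarrow> bool" where
  "adj E u v \<longleftrightarrow> u \<noteq> v \<and> {u, v} \<in> E"

definition is_clique :: "nat set set \<Rightarrow> nat set \<Rightarrow> bool" where
  "is_clique E S \<longleftrightarrow> (\<forall>u\<in>S. \<forall>v\<in>S. u \<noteq> v \<longrightarrow> adj E u v)"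

definition adj_rel :: "nat set set \<Rightarrow> nat set \<Rightarrow> (nat \<times> nat) set" where
  "adj_rel E W = {(a, b). a \<in> W \<and> b \<in> W \<and> adj E a b}"

definition connected_on :: "nat set set \<Rightarrow> nat set \<Rightarrow> bool" where
  "connected_on E W \<longleftrightarrow> W \<noteq> {} \<and> (\<forall>u\<in>W. \<forall>v\<in>W. (u, v) \<in> (adj_rel E W)\<^sup>*)"

definition component :: "nat set set \<Rightarrow> nat set \<Rightarrow> nat \<Rightarrow> nat set" where
  "component E W v = {u \<in> W. (v, u) \<in> (adj_rel E W)\<^sup>*}"

definition components :: "nat set set \<Rightarrow> nat set \<Rightarrow> nat set set" where
  "components E W = component E W ` W"

definition chordal_on :: "nat set set \<Rightarrow> nat set \<Rightarrow> bool" where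
  "chordal_on E V \<longleftrightarrow>
     (\<forall>cs. distinct cs \<and> length cs \<ge> 4 \<and> set cs \<subseteq> V \<and>
        (\<forall>i < length cs. adj E (cs ! i) (cs ! ((i + 1) mod length cs)))
      \<longrightarrow> (\<exists>i < length cs. \<exists>j < length cs. i \<noteq> j \<and> j \<noteq> (i + 1) mod length cs
             \<and> i \<noteq> (j + 1) mod length cs \<and> adj E (cs ! i) (cs ! j)))"

definition colorable_on :: "nat \<Rightarrow> nat set set \<Rightarrow> nat set \<Rightarrow> bool" where
  "colorable_on \<omega> E V \<longleftrightarrow>
     (\<exists>c :: nat \<Rightarrow> nat. (\<forall>v\<in>V. c v < \<omega>) \<and> (\<forall>u\<in>V. \<forall>v\<in>V. adj E u v \<longrightarrow> c u \<noteq> c v))"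

definition good_graph :: "nat \<Rightarrow> nat \<Rightarrow> nat set set \<Rightarrow> bool" where
  "good_graph \<omega> n E \<longleftrightarrow> E \<subseteq> all_edges n \<and> connected_on E {1..n}
     \<and> chordal_on E {1..n} \<and> colorable_on \<omega> E {1..n}"

definition simplicial :: "nat set set \<Rightarrow> nat set \<Rightarrow> nat \<Rightarrow> bool" where
  "simplicial E W v \<longleftrightarrow> v \<in> W \<and> is_clique E {u \<in> W. adj E u v}"

fun remain :: "nat set set \<Rightarrow> nat set \<Rightarrow> nat set \<Rightarrow> nat \<Rightarrow> nat set" where
  "remain E X V 0 = V"
| "remain E X V (Suc i) =
     remain E X V i - {v \<in> remain E X V i - X. simplicial E (remain E X V i) v}"

text \<open>The i-th layer L_i (for i \<ge> 1).\<close>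
definition layer :: "nat set set \<Rightarrow> nat set \<Rightarrow> nat set \<Rightarrow> nat \<Rightarrow> nat set" where
  "layer E X V i = remain E X V (i - 1) - remain E X V i"

definition evap_time :: "nat set set \<Rightarrow> nat set \<Rightarrow> nat set \<Rightarrow> nat \<Rightarrow> bool" where
  "evap_time E X V t \<longleftrightarrow> remain E X V t = X \<and> (\<forall>i<t. remain E X V i \<noteq> X)"

definition set_evap_time :: "nat set set \<Rightarrow> nat set \<Rightarrow> nat set \<Rightarrow> nat set \<Rightarrow> nat \<Rightarrow> bool" where
  "set_evap_time E X V S t \<longleftrightarrow> t \<ge> 1 \<and> layer E X V t \<inter> S \<noteq> {}
     \<and> (\<forall>j>t. layer E X V j \<inter> S = {})"

definition g_count :: "nat \<Rightarrow> nat \<Rightarrow> nat \<Rightarrow> nat \<Rightarrow> nat \<Rightarrow> nat" where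
  "g_count \<omega> s y k z = card {E. good_graph \<omega> (y + k) E \<and> is_clique E {1..y}
     \<and> (\<exists>t \<le> s. evap_time E {1..y} {1..y + k} t)
     \<and> (\<forall>C \<in> components E ({1..y + k} - {1..y}).
          \<exists>u\<in>C. \<exists>w \<in> {1..y} - {1..z}. adj E u w)}"

definition f_count :: "nat \<Rightarrow> nat \<Rightarrow> nat \<Rightarrow> nat \<Rightarrow> nat \<Rightarrow> nat" where
  "f_count \<omega> t x l k = card {E. good_graph \<omega> (x + l + k) E \<and> is_clique E {1..x}
     \<and> evap_time E {1..x} {1..x + l + k} t
     \<and> connected_on E ({1..x + l + k} - {1..x})
     \<and> layer E {1..x} {1..x + l + k} t = {x + 1..x + l}
     \<and> is_clique E ({1..x} \<union> {x + 1..x + l})}"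

definition ftilde_count :: "nat \<Rightarrow> nat \<Rightarrow> nat \<Rightarrow> nat \<Rightarrow> nat \<Rightarrow> nat" where
  "ftilde_count \<omega> t x l k = card {E. good_graph \<omega> (x + l + k) E \<and> is_clique E {1..x}
     \<and> evap_time E {1..x} {1..x + l + k} t
     \<and> connected_on E ({1..x + l + k} - {1..x})
     \<and> layer E {1..x} {1..x + l + k} t = {x + 1..x + l}
     \<and> is_clique E ({1..x} \<union> {x + 1..x + l})
     \<and> {1..x} \<union> {x + 1..x + l} \<subset> {1..x + l + k}
     \<and> (\<forall>C \<in> components E ({1..x + l + k} - ({1..x} \<union> {x + 1..x + l})).
          set_evap_time E {1..x} {1..x + l + k} C (t - 1))}"

end

theory Submission
  imports Defs "HOL-Number_Theory.Cong"
begin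

text \<open>Let \<open>G\<close> be counted by \<open>f(t,x,l,k)\<close>, with \<open>X = [x]\<close> and \<open>L = L\<^sub>G(X)\<close>. Call \<open>K\<close> the union
  of those components of \<open>G - (X \<union> L)\<close> that still have a vertex left after \<open>t - 2\<close> evaporation
  steps (they evaporate exactly at time \<open>t - 1\<close>), and \<open>M\<close> the remaining vertices. The clique
  \<open>X \<union> L\<close> separates \<open>K\<close> from \<open>M\<close>, so \<open>G\<close> is the clique sum of \<open>G[X \<union> L \<union> K]\<close> and
  \<open>G[X \<union> L \<union> M]\<close>. Chordality and colourability pass to and from clique sums, and as long as
  \<open>L\<close> survives, the evaporation of \<open>G\<close> is the union of the evaporations of the two sides
  (the \<open>M\<close>-side with exception set \<open>X \<union> L\<close>). Hence \<open>G[X \<union> L \<union> K]\<close> is counted by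
  \<open>ftilde(t,x,l,|K|)\<close> and \<open>G[X \<union> L \<union> M]\<close> by \<open>g(t-2,x+l,k-|K|,x)\<close>, and conversely gluing two
  such graphs along \<open>X \<union> L\<close> yields a graph counted by \<open>f\<close> whose set \<open>K\<close> is the given one.
  Relabelling \<open>K\<close> and \<open>M\<close> onto intervals and grouping the choices of \<open>K\<close> by size gives the
  binomial sum.\<close>

definition edges :: "nat set \<Rightarrow> nat set set" where
  "edges V = {e. \<exists>u v. e = {u, v} \<and> u \<noteq> v \<and> u \<in> V \<and> v \<in> V}"

lemma all_edges_eq_edges: "all_edges n = edges {1..n}"
  by (simp add: all_edges_def edges_def)

lemma edges_mono: "A \<subseteq> B \<Longrightarrow> edges A \<subseteq> edges B"
  unfolding edges_def by blast

lemma finite_edges: "finite V \<Longrightarrow> finite (edges V)"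
  by (rule finite_subset[of _ "Pow V"]) (auto simp: edges_def)

lemma adj_commute: "adj E u v \<longleftrightarrow> adj E v u"
  unfolding adj_def by (auto simp: insert_commute)

lemma adj_edges_mem: "E \<subseteq> edges V \<Longrightarrow> adj E u v \<Longrightarrow> u \<in> V \<and> v \<in> V"
  unfolding adj_def edges_def by (auto simp: doubleton_eq_iff)

lemma adj_Un: "adj (A \<union> B) u v \<longleftrightarrow> adj A u v \<or> adj B u v"
  unfolding adj_def by auto

lemma is_clique_subset: "is_clique E S \<Longrightarrow> T \<subseteq> S \<Longrightarrow> is_clique E T"
  unfolding is_clique_def by blast

lemma is_clique_Un_edges: "is_clique A S \<Longrightarrow> is_clique (A \<union> B) S"
  unfolding is_clique_def by (auto simp: adj_Un)

definition restrict_edges :: "nat set set \<Rightarrow> nat set \<Rightarrow> nat set set" where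
  "restrict_edges E W = {e \<in> E. e \<subseteq> W}"

lemma adj_restrict_edges: "adj (restrict_edges E W) u v \<longleftrightarrow> adj E u v \<and> u \<in> W \<and> v \<in> W"
  unfolding adj_def restrict_edges_def by auto

lemma restrict_edges_subset_edges: "E \<subseteq> edges V \<Longrightarrow> restrict_edges E W \<subseteq> edges (V \<inter> W)"
  unfolding restrict_edges_def edges_def by (auto 0 4)

lemma is_clique_restrict_edges: "is_clique E S \<Longrightarrow> S \<subseteq> W \<Longrightarrow> is_clique (restrict_edges E W) S"
  unfolding is_clique_def by (auto simp: adj_restrict_edges)

lemma restrict_edges_Un_clique_sum:
  assumes "E1 \<subseteq> edges A" and "E2 \<subseteq> edges B" and "is_clique E1 (A \<inter> B)"
  shows "restrict_edges (E1 \<union> E2) A = E1"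
proof -
  have "e \<in> E1" if e: "e \<in> E2" "e \<subseteq> A" for e
  proof -
    obtain u v where "e = {u, v}" "u \<noteq> v" "u \<in> A \<inter> B" "v \<in> A \<inter> B"
      using e assms(2) unfolding edges_def by blast
    then show ?thesis using assms(3) unfolding is_clique_def adj_def by blast
  qed
  moreover have "e \<subseteq> A" if "e \<in> E1" for e using that assms(1) unfolding edges_def by blast
  ultimately show ?thesis unfolding restrict_edges_def by blast
qed

lemma simplicial_if_clique: "is_clique E W \<Longrightarrow> v \<in> W \<Longrightarrow> simplicial E W v"
  unfolding simplicial_def is_clique_def by blast

lemma not_simplicial_iff:
  "v \<in> W \<Longrightarrow> \<not> simplicial E W v \<longleftrightarrow>
     (\<exists>a b. a \<in> W \<and> b \<in> W \<and> adj E a v \<and> adj E b v \<and> a \<noteq> b \<and> \<not> adj E a b)"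
  unfolding simplicial_def is_clique_def by blast

lemma simplicial_cong:
  assumes "v \<in> W \<longleftrightarrow> v \<in> W'"
    and "\<And>u. u \<in> W \<and> adj E u v \<longleftrightarrow> u \<in> W' \<and> adj E' u v"
    and "\<And>a b. a \<in> W' \<Longrightarrow> b \<in> W' \<Longrightarrow> adj E' a v \<Longrightarrow> adj E' b v \<Longrightarrow> adj E a b \<longleftrightarrow> adj E' a b"
  shows "simplicial E W v \<longleftrightarrow> simplicial E' W' v"
proof -
  have nbhd: "{u \<in> W. adj E u v} = {u \<in> W'. adj E' u v}" using assms(2) by blast
  have "is_clique E {u \<in> W'. adj E' u v} \<longleftrightarrow> is_clique E' {u \<in> W'. adj E' u v}"
    unfolding is_clique_def using assms(3) by auto
  then show ?thesis unfolding simplicial_def nbhd using assms(1) by simp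
qed

subsection \<open>Chordality\<close>

definition is_long_cycle :: "nat set set \<Rightarrow> nat set \<Rightarrow> nat list \<Rightarrow> bool" where
  "is_long_cycle E V cs \<longleftrightarrow> distinct cs \<and> 4 \<le> length cs \<and> set cs \<subseteq> V \<and>
     (\<forall>i < length cs. adj E (cs ! i) (cs ! ((i + 1) mod length cs)))"

definition has_chord :: "nat set set \<Rightarrow> nat list \<Rightarrow> bool" where
  "has_chord E cs \<longleftrightarrow> (\<exists>i < length cs. \<exists>j < length cs. i \<noteq> j \<and> j \<noteq> (i + 1) mod length cs
     \<and> i \<noteq> (j + 1) mod length cs \<and> adj E (cs ! i) (cs ! j))"

lemma chordal_on_iff: "chordal_on E V \<longleftrightarrow> (\<forall>cs. is_long_cycle E V cs \<longrightarrow> has_chord E cs)"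
  unfolding chordal_on_def is_long_cycle_def has_chord_def by blast

lemma is_long_cycle_mono:
  assumes "is_long_cycle E V cs" and "set cs \<subseteq> W"
    and "\<And>u v. u \<in> set cs \<Longrightarrow> v \<in> set cs \<Longrightarrow> adj E u v \<Longrightarrow> adj E' u v"
  shows "is_long_cycle E' W cs"
proof -
  have "cs ! ((i + 1) mod length cs) \<in> set cs" if "i < length cs" for i
    using that by (metis length_pos_if_in_set mod_less_divisor nth_mem)
  then show ?thesis using assms unfolding is_long_cycle_def by simp
qed

lemma has_chord_mono:
  assumes "has_chord E cs"
    and "\<And>u v. u \<in> set cs \<Longrightarrow> v \<in> set cs \<Longrightarrow> adj E u v \<Longrightarrow> adj E' u v"
  shows "has_chord E' cs"
  using assms unfolding has_chord_def by (meson nth_mem)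

lemma chordal_on_induced_subgraph:
  assumes "chordal_on E V" and "W \<subseteq> V"
    and "\<And>u v. u \<in> W \<Longrightarrow> v \<in> W \<Longrightarrow> adj E' u v \<longleftrightarrow> adj E u v"
  shows "chordal_on E' W"
  unfolding chordal_on_iff
proof (intro allI impI)
  fix cs assume cyc: "is_long_cycle E' W cs"
  then have W: "set cs \<subseteq> W" unfolding is_long_cycle_def by blast
  have "is_long_cycle E V cs" by (rule is_long_cycle_mono[OF cyc]) (use assms W in auto)
  then have "has_chord E cs" using assms(1) unfolding chordal_on_iff by blast
  then show "has_chord E' cs" by (rule has_chord_mono) (use assms(3) W in blast)
qed

lemma adj_Un_eq_left:
  assumes "E2 \<subseteq> edges B" and "is_clique E1 (A \<inter> B)" and "u \<in> A" and "v \<in> A"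
  shows "adj (E1 \<union> E2) u v \<longleftrightarrow> adj E1 u v"
  using assms adj_edges_mem[OF assms(1), of u v] unfolding is_clique_def
  by (auto simp: adj_Un adj_def)

lemma walk_meets_separator:
  fixes f :: "nat \<Rightarrow> nat"
  assumes "i < j" and "f i \<in> A - B" and "f j \<in> B - A"
    and inside: "\<And>k. i < k \<Longrightarrow> k < j \<Longrightarrow> f k \<in> A \<union> B"
    and no_jump: "\<And>k. i \<le> k \<Longrightarrow> k < j \<Longrightarrow> f k \<in> A - B \<Longrightarrow> f (Suc k) \<notin> B - A"
  shows "\<exists>k. i < k \<and> k < j \<and> f k \<in> A \<inter> B"
proof (rule ccontr)
  assume avoids: "\<not> ?thesis"
  have "f k \<in> A - B" if "i \<le> k" "k \<le> j" for k
    using that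
  proof (induction k rule: dec_induct)
    case (step n)
    then have "f (Suc n) \<notin> B - A" using no_jump by simp
    then show ?case using step avoids inside[of "Suc n"] assms(3) by (cases "Suc n = j") auto
  qed (use assms(2) in simp)
  then show False using assms(1,3) by simp
qed

lemma mod_add_left_inj:
  fixes a b n p :: nat
  assumes "a < n" and "b < n" and "(p + a) mod n = (p + b) mod n"
  shows "a = b"
proof -
  have "[p + a = p + b] (mod n)" using assms(3) by (simp add: cong_def)
  then have "[a = b] (mod n)" by (simp add: cong_add_lcancel_nat)
  then show ?thesis using assms(1,2) by (simp add: cong_def)
qed

lemma rotated_indices_nonadjacent:
  fixes n p i j :: nat
  assumes "0 < i" and "i + 1 < j" and "j < n"
  shows "(p + i) mod n \<noteq> (p + j) mod n" and "(p + j) mod n \<noteq> ((p + i) mod n + 1) mod n"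
    and "(p + i) mod n \<noteq> ((p + j) mod n + 1) mod n"
proof -
  show "(p + i) mod n \<noteq> (p + j) mod n" using mod_add_left_inj[of i n j p] assms by auto
  show "(p + j) mod n \<noteq> ((p + i) mod n + 1) mod n"
    using mod_add_left_inj[of j n "i + 1" p] assms by (auto simp: mod_Suc_eq)
  show "(p + i) mod n \<noteq> ((p + j) mod n + 1) mod n"
  proof (cases "j + 1 < n")
    case True
    then show ?thesis using mod_add_left_inj[of i n "j + 1" p] assms by (auto simp: mod_Suc_eq)
  next
    case False
    have "((p + j) mod n + 1) mod n = Suc (p + j) mod n" by (simp add: mod_Suc_eq)
    also have "Suc (p + j) = p + n" using False assms by simp
    finally have "((p + j) mod n + 1) mod n = (p + 0) mod n" by simp
    then show ?thesis using mod_add_left_inj[of i n 0 p] assms by auto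
  qed
qed

text \<open>Rotate the cycle to start in \<open>A - B\<close>; walking to a vertex of \<open>B - A\<close> and back to the start
  each crosses the separator \<open>A \<inter> B\<close>.\<close>
lemma long_cycle_meets_separator_twice:
  assumes cyc: "is_long_cycle E (A \<union> B) cs"
    and no_cross: "\<And>u v. u \<in> A - B \<Longrightarrow> v \<in> B - A \<Longrightarrow> \<not> adj E u v"
    and p: "p < length cs" "cs ! p \<in> A - B" and q: "q < length cs" "cs ! q \<in> B - A"
  shows "\<exists>i < length cs. \<exists>j < length cs. i \<noteq> j \<and> j \<noteq> (i + 1) mod length cs
           \<and> i \<noteq> (j + 1) mod length cs \<and> cs ! i \<in> A \<inter> B \<and> cs ! j \<in> A \<inter> B"
proof -
  let ?n = "length cs"
  define f where "f k = cs ! ((p + k) mod ?n)" for k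
  define r where "r = (q + (?n - p)) mod ?n"
  have n: "0 < ?n" using p by auto
  have f_in: "f k \<in> A \<union> B" for k
    using cyc n unfolding f_def is_long_cycle_def by (meson mod_less_divisor nth_mem subsetD)
  have f_step: "adj E (f k) (f (Suc k))" for k
  proof -
    have "adj E (cs ! ((p + k) mod ?n)) (cs ! (((p + k) mod ?n + 1) mod ?n))"
      using cyc n unfolding is_long_cycle_def by simp
    then show ?thesis unfolding f_def by (simp add: mod_Suc_eq)
  qed
  have f0: "f 0 \<in> A - B" and fn: "f ?n \<in> A - B" using p by (simp_all add: f_def)
  have "(p + r) mod ?n = q"
    using p q unfolding r_def by (simp add: mod_add_right_eq)
  then have fr: "f r \<in> B - A" using q by (simp add: f_def)
  have r: "0 < r" "r < ?n" using f0 fr n by (auto simp: r_def intro: gr0I)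
  obtain i where i: "0 < i" "i < r" "f i \<in> A \<inter> B"
    using walk_meets_separator[of 0 r f A B] r f0 fr f_in f_step no_cross by blast
  obtain j where j: "r < j" "j < ?n" "f j \<in> A \<inter> B"
    using walk_meets_separator[of r ?n f B A] r fr fn f_in f_step no_cross adj_commute by blast
  have "0 < i" "i + 1 < j" "j < ?n" using i j by simp_all
  note nonadjacent = rotated_indices_nonadjacent[OF this, of p]
  moreover have "(p + i) mod ?n < ?n" "(p + j) mod ?n < ?n" using n by simp_all
  moreover have "cs ! ((p + i) mod ?n) \<in> A \<inter> B" "cs ! ((p + j) mod ?n) \<in> A \<inter> B"
    using i j by (simp_all add: f_def)
  ultimately show ?thesis by blast
qed

lemma has_chord_across_clique_separator:
  assumes cyc: "is_long_cycle E (A \<union> B) cs" and "\<not> set cs \<subseteq> A" and "\<not> set cs \<subseteq> B"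
    and no_cross: "\<And>u v. u \<in> A - B \<Longrightarrow> v \<in> B - A \<Longrightarrow> \<not> adj E u v"
    and clique: "is_clique E (A \<inter> B)"
  shows "has_chord E cs"
proof -
  have "set cs \<subseteq> A \<union> B" using cyc unfolding is_long_cycle_def by blast
  then obtain p q where "p < length cs" "cs ! p \<in> A - B" "q < length cs" "cs ! q \<in> B - A"
    using assms(2,3) by (auto simp: in_set_conv_nth subset_iff)
  then obtain i j where ij: "i < length cs" "j < length cs" "i \<noteq> j" "j \<noteq> (i + 1) mod length cs"
      "i \<noteq> (j + 1) mod length cs" "cs ! i \<in> A \<inter> B" "cs ! j \<in> A \<inter> B"
    using long_cycle_meets_separator_twice[OF cyc no_cross] by blast
  moreover have "cs ! i \<noteq> cs ! j"
    using cyc ij(1-3) unfolding is_long_cycle_def by (simp add: nth_eq_iff_index_eq)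
  ultimately show ?thesis using clique unfolding has_chord_def is_clique_def by blast
qed

lemma chordal_on_clique_sum:
  assumes ch1: "chordal_on E1 A" and ch2: "chordal_on E2 B"
    and E1: "E1 \<subseteq> edges A" and E2: "E2 \<subseteq> edges B"
    and cl1: "is_clique E1 (A \<inter> B)" and cl2: "is_clique E2 (A \<inter> B)"
  shows "chordal_on (E1 \<union> E2) (A \<union> B)"
  unfolding chordal_on_iff
proof (intro allI impI)
  let ?E = "E1 \<union> E2"
  fix cs assume cyc: "is_long_cycle ?E (A \<union> B) cs"
  have chA: "chordal_on ?E A"
    by (rule chordal_on_induced_subgraph[OF ch1 order_refl]) (rule adj_Un_eq_left[OF E2 cl1])
  have chB: "chordal_on ?E B"
    by (rule chordal_on_induced_subgraph[OF ch2 order_refl])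
      (use adj_Un_eq_left[OF E1, of E2 B] cl2 in \<open>simp add: Un_commute Int_commute\<close>)
  consider "set cs \<subseteq> A" | "set cs \<subseteq> B" | "\<not> set cs \<subseteq> A" "\<not> set cs \<subseteq> B" by blast
  then show "has_chord ?E cs"
  proof cases
    case 1
    then have "is_long_cycle ?E A cs" using is_long_cycle_mono[OF cyc] by blast
    then show ?thesis using chA unfolding chordal_on_iff by blast
  next
    case 2
    then have "is_long_cycle ?E B cs" using is_long_cycle_mono[OF cyc] by blast
    then show ?thesis using chB unfolding chordal_on_iff by blast
  next
    case 3
    show ?thesis
    proof (rule has_chord_across_clique_separator[OF cyc 3])
      show "\<not> adj ?E u v" if "u \<in> A - B" "v \<in> B - A" for u v
        using that adj_edges_mem[OF E1] adj_edges_mem[OF E2] by (auto simp: adj_Un)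
    qed (rule is_clique_Un_edges[OF cl1])
  qed
qed

subsection \<open>Colourings\<close>

lemma colorable_on_subgraph:
  assumes "colorable_on \<omega> E V" and "W \<subseteq> V"
    and "\<And>u v. u \<in> W \<Longrightarrow> v \<in> W \<Longrightarrow> adj E' u v \<Longrightarrow> adj E u v"
  shows "colorable_on \<omega> E' W"
proof -
  obtain c where "\<forall>v\<in>V. c v < \<omega>" "\<forall>u\<in>V. \<forall>v\<in>V. adj E u v \<longrightarrow> c u \<noteq> c v"
    using assms(1) unfolding colorable_on_def by blast
  then show ?thesis unfolding colorable_on_def using assms(2,3) by blast
qed

lemma bij_betw_extending_injections:
  assumes S: "finite S" and f: "inj_on f A" "f ` A \<subseteq> S" and g: "inj_on g A" "g ` A \<subseteq> S"
  obtains \<pi> where "bij_betw \<pi> S S" and "\<And>a. a \<in> A \<Longrightarrow> \<pi> (g a) = f a"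
proof -
  have A: "finite A" using g S by (meson finite_imageD finite_subset)
  define \<pi>0 where "\<pi>0 = f \<circ> inv_into A g"
  have b0: "bij_betw \<pi>0 (g ` A) (f ` A)"
    unfolding \<pi>0_def using f g by (meson bij_betw_inv_into bij_betw_trans inj_on_imp_bij_betw)
  have "card (S - g ` A) = card (S - f ` A)"
    using f g A by (simp add: card_Diff_subset card_image)
  then obtain \<pi>1 where b1: "bij_betw \<pi>1 (S - g ` A) (S - f ` A)"
    using S finite_same_card_bij by blast
  define \<pi> where "\<pi> y = (if y \<in> g ` A then \<pi>0 y else \<pi>1 y)" for y
  have "bij_betw \<pi> (g ` A \<union> (S - g ` A)) (f ` A \<union> (S - f ` A))"
  proof (rule bij_betw_combine)
    show "bij_betw \<pi> (g ` A) (f ` A)" using b0 by (rule bij_betw_cong[THEN iffD2, rotated]) (simp add: \<pi>_def)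
    show "bij_betw \<pi> (S - g ` A) (S - f ` A)" using b1 by (rule bij_betw_cong[THEN iffD2, rotated]) (simp add: \<pi>_def)
  qed blast
  moreover have "g ` A \<union> (S - g ` A) = S" "f ` A \<union> (S - f ` A) = S" using f g by auto
  moreover have "\<pi> (g a) = f a" if "a \<in> A" for a
    using that g by (simp add: \<pi>_def \<pi>0_def)
  ultimately show thesis using that by simp
qed

lemma colorable_on_clique_sum:
  assumes co1: "colorable_on \<omega> E1 A" and co2: "colorable_on \<omega> E2 B"
    and E1: "E1 \<subseteq> edges A" and E2: "E2 \<subseteq> edges B"
    and cl1: "is_clique E1 (A \<inter> B)" and cl2: "is_clique E2 (A \<inter> B)"
  shows "colorable_on \<omega> (E1 \<union> E2) (A \<union> B)"
proof -
  obtain c1 where c1: "\<forall>v\<in>A. c1 v < \<omega>" "\<forall>u\<in>A. \<forall>v\<in>A. adj E1 u v \<longrightarrow> c1 u \<noteq> c1 v"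
    using co1 unfolding colorable_on_def by blast
  obtain c2 where c2: "\<forall>v\<in>B. c2 v < \<omega>" "\<forall>u\<in>B. \<forall>v\<in>B. adj E2 u v \<longrightarrow> c2 u \<noteq> c2 v"
    using co2 unfolding colorable_on_def by blast
  have "inj_on c1 (A \<inter> B)" "inj_on c2 (A \<inter> B)"
    using c1(2) c2(2) cl1 cl2 unfolding inj_on_def is_clique_def by blast+
  then obtain \<pi> where \<pi>: "bij_betw \<pi> {..<\<omega>} {..<\<omega>}" "\<And>q. q \<in> A \<inter> B \<Longrightarrow> \<pi> (c2 q) = c1 q"
    using bij_betw_extending_injections[of "{..<\<omega>}" c1 "A \<inter> B" c2] c1(1) c2(1) by blast
  define c where "c v = (if v \<in> A then c1 v else \<pi> (c2 v))" for v
  have cB: "c v = \<pi> (c2 v)" if "v \<in> B" for v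
    using that \<pi>(2) by (simp add: c_def)
  have "c v < \<omega>" if "v \<in> A \<union> B" for v
    using that c1(1) c2(1) bij_betw_apply[OF \<pi>(1)] by (auto simp: c_def)
  moreover have "c u \<noteq> c v" if uv: "adj (E1 \<union> E2) u v" for u v
  proof -
    consider "adj E1 u v" | "adj E2 u v" using uv by (auto simp: adj_Un)
    then show ?thesis
    proof cases
      case 1
      then show ?thesis using c1(2) adj_edges_mem[OF E1 1] by (simp add: c_def)
    next
      case 2
      then have "u \<in> B" "v \<in> B" using adj_edges_mem[OF E2] by auto
      then have "c2 u \<noteq> c2 v" "c2 u < \<omega>" "c2 v < \<omega>" using c2 2 by auto
      then show ?thesis
        using cB \<open>u \<in> B\<close> \<open>v \<in> B\<close> bij_betw_imp_inj_on[OF \<pi>(1)] by (simp add: inj_on_eq_iff)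
    qed
  qed
  ultimately show ?thesis unfolding colorable_on_def by blast
qed

subsection \<open>Connectivity\<close>

lemma rtrancl_adj_rel_mono:
  assumes "W \<subseteq> W'" and "\<And>u v. u \<in> W \<Longrightarrow> v \<in> W \<Longrightarrow> adj E u v \<Longrightarrow> adj E' u v"
    and "(a, b) \<in> (adj_rel E W)\<^sup>*"
  shows "(a, b) \<in> (adj_rel E' W')\<^sup>*"
proof -
  have "adj_rel E W \<subseteq> adj_rel E' W'" using assms(1,2) unfolding adj_rel_def by auto
  then show ?thesis using assms(3) rtrancl_mono by blast
qed

lemma rtrancl_adj_rel_sym: "(a, b) \<in> (adj_rel E W)\<^sup>* \<Longrightarrow> (b, a) \<in> (adj_rel E W)\<^sup>*"
proof -
  have "sym (adj_rel E W)" unfolding sym_def adj_rel_def using adj_commute by blast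
  then show "(a, b) \<in> (adj_rel E W)\<^sup>* \<Longrightarrow> (b, a) \<in> (adj_rel E W)\<^sup>*"
    using sym_rtrancl unfolding sym_def by blast
qed

lemma adj_rel_cong:
  "(\<And>u w. u \<in> W \<Longrightarrow> w \<in> W \<Longrightarrow> adj E u w \<longleftrightarrow> adj E' u w) \<Longrightarrow> adj_rel E W = adj_rel E' W"
  unfolding adj_rel_def by auto

lemma component_cong:
  "(\<And>u w. u \<in> W \<Longrightarrow> w \<in> W \<Longrightarrow> adj E u w \<longleftrightarrow> adj E' u w) \<Longrightarrow> component E W v = component E' W v"
  unfolding component_def using adj_rel_cong by metis

lemma component_subset: "component E W v \<subseteq> W"
  unfolding component_def by auto

lemma component_self: "v \<in> W \<Longrightarrow> v \<in> component E W v"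
  unfolding component_def by auto

lemma component_closed:
  "u \<in> component E W v \<Longrightarrow> w \<in> W \<Longrightarrow> adj E u w \<Longrightarrow> w \<in> component E W v"
  unfolding component_def adj_rel_def by (auto intro: rtrancl_into_rtrancl)

lemma component_eq:
  assumes "u \<in> component E W v"
  shows "component E W u = component E W v"
proof -
  have vu: "(v, u) \<in> (adj_rel E W)\<^sup>*" using assms unfolding component_def by auto
  then have "(u, v) \<in> (adj_rel E W)\<^sup>*" by (rule rtrancl_adj_rel_sym)
  then show ?thesis unfolding component_def using vu by (auto intro: rtrancl_trans)
qed

lemma components_eq_component:
  assumes "C \<in> components E W" and "v \<in> C"
  shows "C = component E W v"
  using assms component_eq unfolding components_def by blast

lemma component_in_components: "v \<in> W \<Longrightarrow> component E W v \<in> components E W"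
  unfolding components_def by blast

lemma components_nonempty_subset: "C \<in> components E W \<Longrightarrow> C \<noteq> {} \<and> C \<subseteq> W"
  unfolding components_def using component_self component_subset by blast

lemma components_closed:
  "C \<in> components E W \<Longrightarrow> u \<in> C \<Longrightarrow> w \<in> W \<Longrightarrow> adj E u w \<Longrightarrow> w \<in> C"
  by (metis components_eq_component component_closed)

lemma component_separated:
  assumes "v \<in> K" and "K \<subseteq> W" and "\<And>u w. u \<in> K \<Longrightarrow> w \<in> W - K \<Longrightarrow> \<not> adj E u w"
  shows "component E W v = component E K v"
proof
  show "component E K v \<subseteq> component E W v"
    unfolding component_def using assms(2) rtrancl_adj_rel_mono[of K W E E] by auto
next
  have "(v, b) \<in> (adj_rel E K)\<^sup>* \<and> b \<in> K" if "(v, b) \<in> (adj_rel E W)\<^sup>*" for b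
    using that
  proof (induction rule: rtrancl_induct)
    case (step y z)
    then have "z \<in> K" using assms(3) unfolding adj_rel_def by auto
    then show ?case using step unfolding adj_rel_def by (auto intro: rtrancl_into_rtrancl)
  qed (use assms(1) in simp)
  then show "component E W v \<subseteq> component E K v" unfolding component_def by auto
qed

lemma component_has_exit_edge:
  assumes conn: "connected_on E W" and "T \<subseteq> W" and "W - T \<noteq> {}" and C: "C \<in> components E T"
  shows "\<exists>u\<in>C. \<exists>s\<in>W - T. adj E u s"
proof -
  obtain a where a: "a \<in> C" using components_nonempty_subset[OF C] by blast
  obtain b where b: "b \<in> W - T" using assms(3) by blast
  have CT: "C \<subseteq> T" using components_nonempty_subset[OF C] by blast
  have "(a, b) \<in> (adj_rel E W)\<^sup>*" using conn a b CT assms(2) unfolding connected_on_def by blast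
  moreover have "b \<notin> C" using b CT by blast
  ultimately have "\<exists>u\<in>C. \<exists>w\<in>W - C. adj E u w"
  proof (induction rule: rtrancl_induct)
    case (step y z)
    then show ?case by (cases "y \<in> C") (auto simp: adj_rel_def)
  qed (use a in simp)
  then show ?thesis using components_closed[OF C] by blast
qed

lemma connected_on_clique_attach:
  assumes S: "S \<subseteq> W" "S \<noteq> {}" "is_clique E S" and T: "T \<subseteq> W" and cover: "W \<subseteq> S \<union> T"
    and attached: "\<And>w. w \<in> T \<Longrightarrow> \<exists>u\<in>component E T w. \<exists>s\<in>S. adj E u s"
  shows "connected_on E W"
proof -
  have reach: "\<exists>s\<in>S. (w, s) \<in> (adj_rel E W)\<^sup>*" if w: "w \<in> W" for w
  proof (cases "w \<in> S")
    case False
    then obtain u s where us: "u \<in> component E T w" "s \<in> S" "adj E u s"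
      using attached w cover by blast
    have "(w, u) \<in> (adj_rel E W)\<^sup>*"
      using us(1) rtrancl_adj_rel_mono[OF T] unfolding component_def by blast
    moreover have "(u, s) \<in> adj_rel E W"
      using us component_subset T S(1) unfolding adj_rel_def by blast
    ultimately show ?thesis using us(2) by (meson rtrancl.rtrancl_into_rtrancl)
  qed blast
  have "(u, v) \<in> (adj_rel E W)\<^sup>*" if "u \<in> W" "v \<in> W" for u v
  proof -
    obtain s s' where "s \<in> S" "(u, s) \<in> (adj_rel E W)\<^sup>*" "s' \<in> S" "(v, s') \<in> (adj_rel E W)\<^sup>*"
      using reach[OF \<open>u \<in> W\<close>] reach[OF \<open>v \<in> W\<close>] by blast
    moreover have "(s, s') \<in> (adj_rel E W)\<^sup>*"
      using S \<open>s \<in> S\<close> \<open>s' \<in> S\<close> unfolding is_clique_def adj_rel_def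
      by (cases "s = s'") (auto intro: r_into_rtrancl)
    ultimately show ?thesis by (meson rtrancl_adj_rel_sym rtrancl_trans)
  qed
  then show ?thesis unfolding connected_on_def using S by blast
qed

subsection \<open>Evaporation\<close>

lemma remain_subset: "remain E X V i \<subseteq> V"
  by (induction i) auto

lemma remain_antimono: "i \<le> j \<Longrightarrow> remain E X V j \<subseteq> remain E X V i"
  by (induction j rule: dec_induct) auto

lemma exception_subset_remain: "X \<inter> V \<subseteq> remain E X V i"
  by (induction i) auto

lemma remain_Suc_iff:
  "v \<in> remain E X V (Suc i) \<longleftrightarrow> v \<in> remain E X V i \<and> (v \<in> X \<or> \<not> simplicial E (remain E X V i) v)"
  by auto

lemma evap_time_last_steps:
  assumes "evap_time E X V t" and "layer E X V t = L" and "1 \<le> t"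
  shows "remain E X V t = X" and "remain E X V (t - 1) = X \<union> L"
proof -
  show Rt: "remain E X V t = X" using assms(1) unfolding evap_time_def by blast
  have "remain E X V t \<subseteq> remain E X V (t - 1)" using remain_antimono by simp
  then show "remain E X V (t - 1) = X \<union> L" using assms(2) Rt unfolding layer_def by blast
qed

lemma evap_time_exists:
  assumes "remain E X V s = X"
  shows "\<exists>t \<le> s. evap_time E X V t"
proof -
  define t where "t = (LEAST i. remain E X V i = X)"
  have "remain E X V t = X" "t \<le> s" unfolding t_def by (use assms in \<open>rule LeastI, rule Least_le\<close>)
  moreover have "\<forall>i<t. remain E X V i \<noteq> X" unfolding t_def using not_less_Least by blast
  ultimately show ?thesis unfolding evap_time_def by blast
qed

lemma simplicial_restrict_edges:
  assumes "v \<in> P" and "\<And>u. adj E u v \<Longrightarrow> u \<in> P" and "W \<inter> P = W'"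
  shows "simplicial E W v \<longleftrightarrow> simplicial (restrict_edges E P) W' v"
  by (rule simplicial_cong) (use assms in \<open>auto simp: adj_restrict_edges\<close>)

lemma remain_Suc_restrict_edges:
  assumes "v \<in> P" and "v \<notin> X" and "v \<notin> X'" and "\<And>u. adj E u v \<Longrightarrow> u \<in> P"
    and "remain E X V i \<inter> P = remain (restrict_edges E P) X' P i"
  shows "v \<in> remain E X V (Suc i) \<longleftrightarrow> v \<in> remain (restrict_edges E P) X' P (Suc i)"
  using simplicial_restrict_edges[OF assms(1,4,5)] assms(1-3,5) by auto

lemma evap_time_if_clique_remains:
  assumes "remain E X V (t - 1) = X \<union> L" and "1 \<le> t" and "X \<inter> L = {}" and "L \<noteq> {}"
    and "is_clique E (X \<union> L)"
  shows "evap_time E X V t" and "layer E X V t = L"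
proof -
  have "remain E X V (Suc (t - 1)) = X"
    using assms(1,3) simplicial_if_clique[OF assms(5)] by auto
  then have Rt: "remain E X V t = X" using assms(2) by simp
  have "remain E X V i \<noteq> X" if "i < t" for i
  proof -
    have "L \<subseteq> remain E X V i" using remain_antimono[of i "t - 1" E X V] that assms(1) by simp
    then show ?thesis using assms(3,4) by blast
  qed
  then show "evap_time E X V t" unfolding evap_time_def using Rt by blast
  show "layer E X V t = L" unfolding layer_def using assms(1,3) Rt by blast
qed

subsection \<open>Relabelling vertices\<close>

definition rename_edges :: "(nat \<Rightarrow> nat) \<Rightarrow> nat set set \<Rightarrow> nat set set" where
  "rename_edges h E = (\<lambda>e. h ` e) ` E"

lemma rename_edges_edges:
  assumes inj: "inj_on h V" and E: "E \<subseteq> edges V"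
  shows "rename_edges h E \<subseteq> edges (h ` V)"
proof
  fix e assume "e \<in> rename_edges h E"
  then obtain u v where "e = {h u, h v}" "u \<noteq> v" "u \<in> V" "v \<in> V"
    using E unfolding rename_edges_def edges_def by blast
  moreover have "h u \<noteq> h v" using inj calculation(2-4) by (auto dest: inj_onD)
  ultimately show "e \<in> edges (h ` V)" unfolding edges_def by auto
qed

lemma adj_rename_edges:
  assumes inj: "inj_on h V" and E: "E \<subseteq> edges V" and a: "a \<in> V" and b: "b \<in> V"
  shows "adj (rename_edges h E) (h a) (h b) \<longleftrightarrow> adj E a b"
proof
  assume "adj (rename_edges h E) (h a) (h b)"
  then obtain e where e: "e \<in> E" "{h a, h b} = h ` e" "h a \<noteq> h b"
    unfolding adj_def rename_edges_def by auto
  from e(1) E obtain u v where uv: "e = {u, v}" "u \<in> V" "v \<in> V" "u \<noteq> v"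
    unfolding edges_def by auto
  have "{h a, h b} = {h u, h v}" using e uv by auto
  then have "(h a = h u \<and> h b = h v) \<or> (h a = h v \<and> h b = h u)"
    by (auto simp: doubleton_eq_iff)
  then have "(a = u \<and> b = v) \<or> (a = v \<and> b = u)"
    using inj a b uv by (auto dest: inj_onD)
  then show "adj E a b" using e uv unfolding adj_def by (auto simp: insert_commute)
next
  assume "adj E a b"
  then have "{a, b} \<in> E" "h a \<noteq> h b" using inj a b unfolding adj_def by (auto dest: inj_onD)
  moreover have "{h a, h b} = h ` {a, b}" by simp
  ultimately show "adj (rename_edges h E) (h a) (h b)"
    unfolding adj_def rename_edges_def by (metis image_eqI)
qed

lemma rename_edges_cancel:
  assumes "E \<subseteq> edges V" and "\<And>v. v \<in> V \<Longrightarrow> g (h v) = v"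
  shows "rename_edges g (rename_edges h E) = E"
proof -
  have "g ` h ` e = e" if "e \<in> E" for e
    using that assms unfolding edges_def by (force simp: image_image)
  then show ?thesis unfolding rename_edges_def by (simp add: image_image)
qed

lemma rename_edges_inv:
  "inj_on h V \<Longrightarrow> E \<subseteq> edges V \<Longrightarrow> rename_edges (inv_into V h) (rename_edges h E) = E"
  by (rule rename_edges_cancel) auto

lemma is_clique_rename_edges:
  assumes "inj_on h V" and "E \<subseteq> edges V" and "S \<subseteq> V"
  shows "is_clique (rename_edges h E) (h ` S) \<longleftrightarrow> is_clique E S"
  unfolding is_clique_def using adj_rename_edges[OF assms(1,2)] assms
  by (auto simp: subset_iff inj_on_eq_iff)

lemma simplicial_rename_edges:
  assumes inj: "inj_on h V" and E: "E \<subseteq> edges V" and W: "W \<subseteq> V" and v: "v \<in> V"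
  shows "simplicial (rename_edges h E) (h ` W) (h v) \<longleftrightarrow> simplicial E W v"
proof -
  have "{u \<in> h ` W. adj (rename_edges h E) u (h v)} = h ` {u \<in> W. adj E u v}"
    using adj_rename_edges[OF inj E] W v by (auto simp: subset_iff)
  moreover have "h v \<in> h ` W \<longleftrightarrow> v \<in> W" using inj W v by (auto simp: inj_on_image_mem_iff)
  ultimately show ?thesis
    unfolding simplicial_def using is_clique_rename_edges[OF inj E, of "{u \<in> W. adj E u v}"] W
    by auto
qed

lemma remain_rename_edges:
  assumes inj: "inj_on h V" and E: "E \<subseteq> edges V" and X: "X \<subseteq> V"
  shows "remain (rename_edges h E) (h ` X) (h ` V) i = h ` remain E X V i"
proof (induction i)
  case (Suc i)
  let ?R = "remain E X V i"
  have R: "?R \<subseteq> V" by (rule remain_subset)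
  have "h ` (?R - {v \<in> ?R - X. simplicial E ?R v})
     = h ` ?R - h ` {v \<in> ?R - X. simplicial E ?R v}"
    by (rule inj_on_image_set_diff[OF inj]) (use R in auto)
  also have "h ` {v \<in> ?R - X. simplicial E ?R v}
     = {w \<in> h ` ?R - h ` X. simplicial (rename_edges h E) (h ` ?R) w}"
  proof -
    have "h v \<in> h ` X \<longleftrightarrow> v \<in> X" if "v \<in> ?R" for v
      using that inj X R by (meson inj_on_image_mem_iff subsetD)
    then show ?thesis using simplicial_rename_edges[OF inj E R] R by auto
  qed
  finally show ?case using Suc by simp
qed simp

lemma layer_rename_edges:
  assumes "inj_on h V" and "E \<subseteq> edges V" and "X \<subseteq> V"
  shows "layer (rename_edges h E) (h ` X) (h ` V) i = h ` layer E X V i"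
  unfolding layer_def remain_rename_edges[OF assms]
  by (rule inj_on_image_set_diff[symmetric, OF assms(1)]) (meson Diff_subset remain_subset subset_trans)+

lemma evap_time_rename_edges:
  assumes "inj_on h V" and "E \<subseteq> edges V" and "X \<subseteq> V"
  shows "evap_time (rename_edges h E) (h ` X) (h ` V) t \<longleftrightarrow> evap_time E X V t"
  unfolding evap_time_def remain_rename_edges[OF assms]
  using inj_on_image_eq_iff[OF assms(1) remain_subset assms(3)] by simp

lemma set_evap_time_rename_edges:
  assumes "inj_on h V" and "E \<subseteq> edges V" and "X \<subseteq> V" and "S \<subseteq> V"
  shows "set_evap_time (rename_edges h E) (h ` X) (h ` V) (h ` S) t \<longleftrightarrow> set_evap_time E X V S t"
proof -
  have "layer E X V j \<subseteq> V" for j using remain_subset unfolding layer_def by blast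
  then have "layer (rename_edges h E) (h ` X) (h ` V) j \<inter> h ` S = h ` (layer E X V j \<inter> S)" for j
    unfolding layer_rename_edges[OF assms(1-3)] using inj_on_image_Int[OF assms(1) _ assms(4)] by blast
  then show ?thesis unfolding set_evap_time_def by simp
qed

lemma rtrancl_adj_rel_rename_edges:
  assumes inj: "inj_on h V" and E: "E \<subseteq> edges V" and W: "W \<subseteq> V"
    and "(a, b) \<in> (adj_rel E W)\<^sup>*"
  shows "(h a, h b) \<in> (adj_rel (rename_edges h E) (h ` W))\<^sup>*"
  using assms(4)
proof (induction rule: rtrancl_induct)
  case (step b c)
  then have "(h b, h c) \<in> adj_rel (rename_edges h E) (h ` W)"
    using adj_rename_edges[OF inj E] W unfolding adj_rel_def by auto
  then show ?case using step by (meson rtrancl.rtrancl_into_rtrancl)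
qed simp

lemma rtrancl_adj_rel_rename_edges_iff:
  assumes inj: "inj_on h V" and E: "E \<subseteq> edges V" and W: "W \<subseteq> V" and "a \<in> W" and "b \<in> W"
  shows "(h a, h b) \<in> (adj_rel (rename_edges h E) (h ` W))\<^sup>* \<longleftrightarrow> (a, b) \<in> (adj_rel E W)\<^sup>*"
proof
  assume "(h a, h b) \<in> (adj_rel (rename_edges h E) (h ` W))\<^sup>*"
  from rtrancl_adj_rel_rename_edges[OF inj_on_inv_into[OF order_refl] rename_edges_edges[OF inj E] _ this]
  have "(inv_into V h (h a), inv_into V h (h b)) \<in> (adj_rel E (inv_into V h ` h ` W))\<^sup>*"
    using W by (simp add: rename_edges_inv[OF inj E] image_mono)
  then show "(a, b) \<in> (adj_rel E W)\<^sup>*"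
    using W assms(4,5) inj by (simp add: inv_into_image_cancel subset_iff)
qed (rule rtrancl_adj_rel_rename_edges[OF assms(1-3)])

lemma components_rename_edges:
  assumes "inj_on h V" and "E \<subseteq> edges V" and "W \<subseteq> V"
  shows "components (rename_edges h E) (h ` W) = (\<lambda>C. h ` C) ` components E W"
proof -
  have "component (rename_edges h E) (h ` W) (h v) = h ` component E W v" if "v \<in> W" for v
    unfolding component_def using rtrancl_adj_rel_rename_edges_iff[OF assms that] by auto
  then show ?thesis unfolding components_def by (auto simp: image_image)
qed

lemma connected_on_rename_edges:
  assumes "inj_on h V" and "E \<subseteq> edges V" and "W \<subseteq> V"
  shows "connected_on (rename_edges h E) (h ` W) \<longleftrightarrow> connected_on E W"
  unfolding connected_on_def using rtrancl_adj_rel_rename_edges_iff[OF assms] by auto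

lemma chordal_on_pullback:
  assumes inj: "inj_on h V" and E: "E \<subseteq> edges V"
    and ch: "chordal_on (rename_edges h E) (h ` V)"
  shows "chordal_on E V"
  unfolding chordal_on_iff
proof (intro allI impI)
  fix cs assume cyc: "is_long_cycle E V cs"
  then have V: "set cs \<subseteq> V" unfolding is_long_cycle_def by blast
  have adj_map: "adj (rename_edges h E) (map h cs ! i) (map h cs ! j) \<longleftrightarrow> adj E (cs ! i) (cs ! j)"
    if "i < length cs" "j < length cs" for i j
    using that V adj_rename_edges[OF inj E] by (simp add: subset_iff)
  have "adj (rename_edges h E) (map h cs ! i) (map h cs ! ((i + 1) mod length cs))"
    if i: "i < length cs" for i
  proof -
    have "(i + 1) mod length cs < length cs" using i by (metis mod_less_divisor not_less_zero gr0I)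
    then show ?thesis using i cyc adj_map[OF i] unfolding is_long_cycle_def by simp
  qed
  then have "is_long_cycle (rename_edges h E) (h ` V) (map h cs)"
    using cyc V inj unfolding is_long_cycle_def by (auto simp: distinct_map inj_on_subset)
  then have "has_chord (rename_edges h E) (map h cs)" using ch unfolding chordal_on_iff by blast
  then show "has_chord E cs" using adj_map unfolding has_chord_def by fastforce
qed

lemma chordal_on_rename_edges:
  assumes "inj_on h V" and "E \<subseteq> edges V"
  shows "chordal_on (rename_edges h E) (h ` V) \<longleftrightarrow> chordal_on E V"
proof
  assume "chordal_on E V"
  then have "chordal_on (rename_edges (inv_into V h) (rename_edges h E)) (inv_into V h ` h ` V)"
    using rename_edges_inv[OF assms] assms(1) by (simp add: inv_into_image_cancel)
  then show "chordal_on (rename_edges h E) (h ` V)"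
    by (rule chordal_on_pullback[OF inj_on_inv_into[OF order_refl] rename_edges_edges[OF assms]])
qed (rule chordal_on_pullback[OF assms])

lemma colorable_on_rename_edges:
  assumes "inj_on h V" and "E \<subseteq> edges V"
  shows "colorable_on \<omega> (rename_edges h E) (h ` V) \<longleftrightarrow> colorable_on \<omega> E V"
proof
  assume "colorable_on \<omega> (rename_edges h E) (h ` V)"
  then obtain c where "\<forall>v\<in>h ` V. c v < \<omega>"
      "\<forall>u\<in>h ` V. \<forall>v\<in>h ` V. adj (rename_edges h E) u v \<longrightarrow> c u \<noteq> c v"
    unfolding colorable_on_def by blast
  then show "colorable_on \<omega> E V" unfolding colorable_on_def
    by (intro exI[of _ "c \<circ> h"]) (use adj_rename_edges[OF assms] in auto)
next
  assume "colorable_on \<omega> E V"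
  then obtain c where "\<forall>v\<in>V. c v < \<omega>" "\<forall>u\<in>V. \<forall>v\<in>V. adj E u v \<longrightarrow> c u \<noteq> c v"
    unfolding colorable_on_def by blast
  then show "colorable_on \<omega> (rename_edges h E) (h ` V)" unfolding colorable_on_def
    by (intro exI[of _ "c \<circ> inv_into V h"]) (use adj_rename_edges[OF assms] assms(1) in auto)
qed

lemma card_eq_if_relabelling_invariant:
  fixes P :: "nat set \<Rightarrow> nat set set set"
  assumes invariant: "\<And>h V E. inj_on h V \<Longrightarrow> (\<And>q. q \<in> Q \<Longrightarrow> h q = q) \<Longrightarrow> Q \<subseteq> V \<Longrightarrow> E \<in> P V
        \<Longrightarrow> rename_edges h E \<in> P (h ` V)"
    and edges: "\<And>V E. E \<in> P V \<Longrightarrow> E \<subseteq> edges V"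
    and bij: "bij_betw h V V'" and h_id: "\<And>q. q \<in> Q \<Longrightarrow> h q = q" and "Q \<subseteq> V"
  shows "card (P V) = card (P V')"
proof -
  have inj: "inj_on h V" and hV: "h ` V = V'" using bij unfolding bij_betw_def by auto
  let ?g = "inv_into V h"
  have g: "inj_on ?g V'" "?g ` V' = V" "\<And>q. q \<in> Q \<Longrightarrow> ?g q = q"
    using hV inj h_id \<open>Q \<subseteq> V\<close> by (auto simp: inj_on_inv_into inv_into_image_cancel intro: inv_into_f_eq)
  have "Q \<subseteq> V'" using h_id \<open>Q \<subseteq> V\<close> hV by force
  show ?thesis
  proof (rule bij_betw_same_card, rule bij_betw_byWitness[where f'="rename_edges ?g"])
    show "\<forall>E\<in>P V. rename_edges ?g (rename_edges h E) = E"
      using rename_edges_inv[OF inj] edges by blast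
    show "\<forall>E\<in>P V'. rename_edges h (rename_edges ?g E) = E"
      using rename_edges_cancel edges hV by (metis f_inv_into_f)
    show "rename_edges h ` P V \<subseteq> P V'" using invariant[OF inj h_id \<open>Q \<subseteq> V\<close>] hV by blast
    show "rename_edges ?g ` P V' \<subseteq> P V"
    proof
      fix E' assume "E' \<in> rename_edges ?g ` P V'"
      then obtain E where "E \<in> P V'" "E' = rename_edges ?g E" by blast
      moreover have "rename_edges ?g E \<in> P (?g ` V')"
        by (rule invariant) (use g \<open>Q \<subseteq> V'\<close> \<open>E \<in> P V'\<close> in auto)
      ultimately show "E' \<in> P V" using g(2) by simp
    qed
  qed
qed

lemma card_relabel_onto_interval:
  fixes P :: "nat set \<Rightarrow> nat set set set"
  assumes invariant: "\<And>h V E. inj_on h V \<Longrightarrow> (\<And>q. q \<in> {1..n} \<Longrightarrow> h q = q) \<Longrightarrow> {1..n} \<subseteq> V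
        \<Longrightarrow> E \<in> P V \<Longrightarrow> rename_edges h E \<in> P (h ` V)"
    and edges: "\<And>V E. E \<in> P V \<Longrightarrow> E \<subseteq> edges V"
    and "finite K" and "K \<inter> {1..n} = {}"
  shows "card (P ({1..n} \<union> K)) = card (P {1..n + card K})"
proof -
  have "card {n+1..n + card K} = card K" by simp
  then obtain g where g: "bij_betw g {n+1..n + card K} K"
    using finite_same_card_bij \<open>finite K\<close> by blast
  define h where "h v = (if v \<le> n then v else g v)" for v
  have "bij_betw h ({1..n} \<union> {n+1..n + card K}) ({1..n} \<union> K)"
  proof (rule bij_betw_combine)
    show "bij_betw h {1..n} {1..n}" by (rule bij_betw_cong[THEN iffD2, of _ _ id]) (auto simp: h_def)
    show "bij_betw h {n+1..n + card K} K" by (rule bij_betw_cong[THEN iffD2, OF _ g]) (auto simp: h_def)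
  qed (use assms(4) in blast)
  moreover have "{1..n} \<union> {n+1..n + card K} = {1..n + card K}" by auto
  ultimately have "bij_betw h {1..n + card K} ({1..n} \<union> K)" by simp
  then have "card (P {1..n + card K}) = card (P ({1..n} \<union> K))"
    using card_eq_if_relabelling_invariant[where Q = "{1..n}", OF invariant edges]
    by (simp add: h_def)
  then show ?thesis by simp
qed

subsection \<open>The counted graph classes on arbitrary vertex sets\<close>

definition f_graphs :: "nat \<Rightarrow> nat \<Rightarrow> nat set \<Rightarrow> nat set \<Rightarrow> nat set \<Rightarrow> nat set set set" where
  "f_graphs \<omega> t X L V = {E. E \<subseteq> edges V \<and> connected_on E V \<and> chordal_on E V \<and> colorable_on \<omega> E V
     \<and> is_clique E X \<and> evap_time E X V t \<and> connected_on E (V - X)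
     \<and> layer E X V t = L \<and> is_clique E (X \<union> L)}"

definition ftilde_graphs :: "nat \<Rightarrow> nat \<Rightarrow> nat set \<Rightarrow> nat set \<Rightarrow> nat set \<Rightarrow> nat set set set" where
  "ftilde_graphs \<omega> t X L V = {E. E \<in> f_graphs \<omega> t X L V \<and> X \<union> L \<subset> V
     \<and> (\<forall>C \<in> components E (V - (X \<union> L)). set_evap_time E X V C (t - 1))}"

definition g_graphs :: "nat \<Rightarrow> nat \<Rightarrow> nat set \<Rightarrow> nat set \<Rightarrow> nat set \<Rightarrow> nat set set set" where
  "g_graphs \<omega> s Y Z V = {E. E \<subseteq> edges V \<and> connected_on E V \<and> chordal_on E V \<and> colorable_on \<omega> E V
     \<and> is_clique E Y \<and> (\<exists>t \<le> s. evap_time E Y V t)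
     \<and> (\<forall>C \<in> components E (V - Y). \<exists>u\<in>C. \<exists>w \<in> Y - Z. adj E u w)}"

lemma f_count_eq_card: "f_count \<omega> t x l k = card (f_graphs \<omega> t {1..x} {x+1..x+l} {1..x+l+k})"
  unfolding f_count_def f_graphs_def good_graph_def all_edges_eq_edges
  by (rule arg_cong[where f = card]) blast

lemma ftilde_count_eq_card:
  "ftilde_count \<omega> t x l k = card (ftilde_graphs \<omega> t {1..x} {x+1..x+l} {1..x+l+k})"
  unfolding ftilde_count_def ftilde_graphs_def f_graphs_def good_graph_def all_edges_eq_edges
  by (rule arg_cong[where f = card]) blast

lemma g_count_eq_card: "g_count \<omega> s y k z = card (g_graphs \<omega> s {1..y} {1..z} {1..y+k})"
  unfolding g_count_def g_graphs_def good_graph_def all_edges_eq_edges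
  by (rule arg_cong[where f = card]) blast

lemma ftilde_graphs_edges: "E \<in> ftilde_graphs \<omega> t X L V \<Longrightarrow> E \<subseteq> edges V"
  unfolding ftilde_graphs_def f_graphs_def by blast

lemma g_graphs_edges: "E \<in> g_graphs \<omega> s Y Z V \<Longrightarrow> E \<subseteq> edges V"
  unfolding g_graphs_def by blast

lemma finite_ftilde_graphs: "finite V \<Longrightarrow> finite (ftilde_graphs \<omega> t X L V)"
  by (rule finite_subset[of _ "Pow (edges V)"]) (use ftilde_graphs_edges finite_edges in blast)+

lemma finite_g_graphs: "finite V \<Longrightarrow> finite (g_graphs \<omega> s Y Z V)"
  by (rule finite_subset[of _ "Pow (edges V)"]) (use g_graphs_edges finite_edges in blast)+

lemma f_graphs_rename_edges:
  assumes inj: "inj_on h V" and h_id: "\<And>q. q \<in> X \<union> L \<Longrightarrow> h q = q" and QV: "X \<union> L \<subseteq> V"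
    and E: "E \<in> f_graphs \<omega> t X L V"
  shows "rename_edges h E \<in> f_graphs \<omega> t X L (h ` V)"
proof -
  have Ee: "E \<subseteq> edges V" using E unfolding f_graphs_def by blast
  have XV: "X \<subseteq> V" using QV by blast
  have hX: "h ` X = X" and hQ: "h ` (X \<union> L) = X \<union> L" using h_id by force+
  have hVX: "h ` (V - X) = h ` V - X"
    using inj_on_image_set_diff[OF inj, of V X] XV hX by auto
  show ?thesis unfolding f_graphs_def mem_Collect_eq
  proof (intro conjI)
    show "rename_edges h E \<subseteq> edges (h ` V)" by (rule rename_edges_edges[OF inj Ee])
    show "connected_on (rename_edges h E) (h ` V)" "chordal_on (rename_edges h E) (h ` V)"
      "colorable_on \<omega> (rename_edges h E) (h ` V)"
      using E connected_on_rename_edges[OF inj Ee order_refl] chordal_on_rename_edges[OF inj Ee]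
        colorable_on_rename_edges[OF inj Ee] unfolding f_graphs_def by blast+
    show "is_clique (rename_edges h E) X" "is_clique (rename_edges h E) (X \<union> L)"
      using E is_clique_rename_edges[OF inj Ee XV] is_clique_rename_edges[OF inj Ee QV] hX hQ
      unfolding f_graphs_def by simp_all
    show "evap_time (rename_edges h E) X (h ` V) t"
      using E evap_time_rename_edges[OF inj Ee XV] hX unfolding f_graphs_def by simp
    show "layer (rename_edges h E) X (h ` V) t = L"
      using E layer_rename_edges[OF inj Ee XV] hX h_id unfolding f_graphs_def by force
    show "connected_on (rename_edges h E) (h ` V - X)"
      using E connected_on_rename_edges[OF inj Ee, of "V - X"] hVX unfolding f_graphs_def by auto
  qed
qed

lemma ftilde_graphs_rename_edges:
  assumes inj: "inj_on h V" and h_id: "\<And>q. q \<in> X \<union> L \<Longrightarrow> h q = q" and QV: "X \<union> L \<subseteq> V"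
    and E: "E \<in> ftilde_graphs \<omega> t X L V"
  shows "rename_edges h E \<in> ftilde_graphs \<omega> t X L (h ` V)"
proof -
  have Ee: "E \<subseteq> edges V" using E by (rule ftilde_graphs_edges)
  have hX: "h ` X = X" and hQ: "h ` (X \<union> L) = X \<union> L" using h_id by force+
  have hVQ: "h ` (V - (X \<union> L)) = h ` V - (X \<union> L)"
    using inj_on_image_set_diff[OF inj, of V "X \<union> L"] QV hQ by auto
  have "X \<union> L \<subset> h ` V"
  proof -
    obtain v where "v \<in> V" "v \<notin> X \<union> L" using E unfolding ftilde_graphs_def by blast
    then have "h v \<notin> X \<union> L" using inj QV hQ by (metis inj_on_image_mem_iff)
    then show ?thesis using QV hQ \<open>v \<in> V\<close> by blast
  qed
  moreover have "set_evap_time (rename_edges h E) X (h ` V) C' (t - 1)"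
    if C': "C' \<in> components (rename_edges h E) (h ` V - (X \<union> L))" for C'
  proof -
    obtain C where C: "C \<in> components E (V - (X \<union> L))" "C' = h ` C"
      using C' components_rename_edges[OF inj Ee, of "V - (X \<union> L)"] hVQ by auto
    have "C \<subseteq> V" using components_nonempty_subset[OF C(1)] by blast
    moreover have "set_evap_time E X V C (t - 1)" using E C(1) unfolding ftilde_graphs_def by blast
    ultimately show ?thesis
      using set_evap_time_rename_edges[OF inj Ee _ \<open>C \<subseteq> V\<close>, of X "t - 1"] QV hX C(2) by auto
  qed
  ultimately show ?thesis
    using f_graphs_rename_edges[OF assms(1-3)] E unfolding ftilde_graphs_def by blast
qed

lemma g_graphs_rename_edges:
  assumes inj: "inj_on h V" and h_id: "\<And>q. q \<in> Y \<Longrightarrow> h q = q" and YV: "Y \<subseteq> V"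
    and E: "E \<in> g_graphs \<omega> s Y Z V"
  shows "rename_edges h E \<in> g_graphs \<omega> s Y Z (h ` V)"
proof -
  have Ee: "E \<subseteq> edges V" using E by (rule g_graphs_edges)
  have hY: "h ` Y = Y" using h_id by force
  have hVY: "h ` (V - Y) = h ` V - Y"
    using inj_on_image_set_diff[OF inj, of V Y] YV hY by auto
  have "\<exists>u\<in>C'. \<exists>w \<in> Y - Z. adj (rename_edges h E) u w"
    if C': "C' \<in> components (rename_edges h E) (h ` V - Y)" for C'
  proof -
    obtain C where C: "C \<in> components E (V - Y)" "C' = h ` C"
      using C' components_rename_edges[OF inj Ee, of "V - Y"] hVY by auto
    obtain u w where uw: "u \<in> C" "w \<in> Y - Z" "adj E u w" using E C(1) unfolding g_graphs_def by blast
    then have "adj (rename_edges h E) (h u) (h w)"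
      using adj_rename_edges[OF inj Ee] components_nonempty_subset[OF C(1)] YV by blast
    then show ?thesis using uw h_id C(2) by force
  qed
  then show ?thesis using E unfolding g_graphs_def
    using rename_edges_edges[OF inj Ee] connected_on_rename_edges[OF inj Ee order_refl]
      chordal_on_rename_edges[OF inj Ee] colorable_on_rename_edges[OF inj Ee]
      is_clique_rename_edges[OF inj Ee YV] evap_time_rename_edges[OF inj Ee YV] hY
    by auto
qed

lemma card_ftilde_graphs_relabel:
  assumes "finite K" and "K \<inter> {1..x+l} = {}"
  shows "card (ftilde_graphs \<omega> t {1..x} {x+1..x+l} ({1..x} \<union> {x+1..x+l} \<union> K))
    = ftilde_count \<omega> t x l (card K)"
proof -
  have Q: "{1..x} \<union> {x+1..x+l} = {1..x+l}" by auto
  have "card (ftilde_graphs \<omega> t {1..x} {x+1..x+l} ({1..x+l} \<union> K))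
      = card (ftilde_graphs \<omega> t {1..x} {x+1..x+l} {1..x+l + card K})"
    by (rule card_relabel_onto_interval[OF _ ftilde_graphs_edges assms])
      (rule ftilde_graphs_rename_edges, auto simp: Q)
  then show ?thesis unfolding ftilde_count_eq_card Q by simp
qed

lemma card_g_graphs_relabel:
  assumes "finite K" and "K \<inter> {1..x+l} = {}"
  shows "card (g_graphs \<omega> s ({1..x} \<union> {x+1..x+l}) {1..x} ({1..x} \<union> {x+1..x+l} \<union> K))
    = g_count \<omega> s (x+l) (card K) x"
proof -
  have Q: "{1..x} \<union> {x+1..x+l} = {1..x+l}" by auto
  have "card (g_graphs \<omega> s {1..x+l} {1..x} ({1..x+l} \<union> K))
      = card (g_graphs \<omega> s {1..x+l} {1..x} {1..x+l + card K})"
    by (rule card_relabel_onto_interval[OF _ g_graphs_edges assms])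
      (rule g_graphs_rename_edges, auto)
  then show ?thesis unfolding g_count_eq_card Q by simp
qed

text \<open>For \<open>E\<close> counted by \<open>f\<close> these are the components of \<open>G - (X \<union> L)\<close> that evaporate at time
  \<open>t - 1\<close>.\<close>
definition late_part :: "nat \<Rightarrow> nat set \<Rightarrow> nat set \<Rightarrow> nat set \<Rightarrow> nat set set \<Rightarrow> nat set" where
  "late_part t X L U E = \<Union>{C \<in> components E U. C \<inter> remain E X (X \<union> L \<union> U) (t - 2) \<noteq> {}}"

lemma mem_late_part_iff:
  "u \<in> late_part t X L U E \<longleftrightarrow> u \<in> U \<and> component E U u \<inter> remain E X (X \<union> L \<union> U) (t - 2) \<noteq> {}"
proof
  assume "u \<in> late_part t X L U E"
  then obtain C where C: "C \<in> components E U" "u \<in> C"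
      "C \<inter> remain E X (X \<union> L \<union> U) (t - 2) \<noteq> {}"
    unfolding late_part_def by blast
  then show "u \<in> U \<and> component E U u \<inter> remain E X (X \<union> L \<union> U) (t - 2) \<noteq> {}"
    using components_eq_component[OF C(1,2)] components_nonempty_subset[OF C(1)] by auto
next
  assume "u \<in> U \<and> component E U u \<inter> remain E X (X \<union> L \<union> U) (t - 2) \<noteq> {}"
  then show "u \<in> late_part t X L U E"
    unfolding late_part_def using component_in_components component_self by blast
qed

lemma late_part_subset: "late_part t X L U E \<subseteq> U"
  using mem_late_part_iff by blast

lemma late_part_no_edge:
  assumes "u \<in> late_part t X L U E" and "w \<in> U - late_part t X L U E"
  shows "\<not> adj E u w"
proof
  assume "adj E u w"
  have "u \<in> U" using assms(1) late_part_subset by blast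
  then have "w \<in> component E U u"
    using component_closed[OF component_self \<open>w \<in> U - _\<close>[THEN DiffD1] \<open>adj E u w\<close>] by blast
  then have "component E U w = component E U u" by (rule component_eq)
  then show False using assms mem_late_part_iff by (metis DiffD1 DiffD2)
qed

lemma remain_disjoint_early_part:
  "remain E X (X \<union> L \<union> U) (t - 2) \<inter> (U - late_part t X L U E) = {}"
  using mem_late_part_iff[of _ t X L U E] component_self[of _ U E] by blast

lemma late_part_components:
  assumes "C \<in> components E U" and "C \<subseteq> late_part t X L U E"
  shows "C \<inter> remain E X (X \<union> L \<union> U) (t - 2) \<noteq> {}"
proof -
  obtain c where c: "c \<in> C" using components_nonempty_subset[OF assms(1)] by blast
  then have "c \<in> late_part t X L U E" using assms(2) by blast
  then show ?thesis
    using components_eq_component[OF assms(1) c] mem_late_part_iff[of c t X L U E] by simp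
qed

subsection \<open>Cutting along the clique \<open>X \<union> L\<close>\<close>

text \<open>\<open>E1\<close> is the part counted by \<open>ftilde_count\<close> and \<open>E2\<close> the part counted by \<open>g_count\<close>,
  whose exception set is the whole clique \<open>X \<union> L\<close>.\<close>
locale clique_cut =
  fixes E :: "nat set set" and X L K M :: "nat set"
  assumes disj_XL: "X \<inter> L = {}" and disj_K: "K \<inter> (X \<union> L) = {}" and disj_M: "M \<inter> (X \<union> L) = {}"
    and disj_KM: "K \<inter> M = {}"
    and E_edges: "E \<subseteq> edges (X \<union> L \<union> K \<union> M)"
    and no_KM_edge: "\<And>u w. u \<in> K \<Longrightarrow> w \<in> M \<Longrightarrow> \<not> adj E u w"
    and clique_XL: "is_clique E (X \<union> L)"
begin

abbreviation "V \<equiv> X \<union> L \<union> K \<union> M"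
abbreviation "E1 \<equiv> restrict_edges E (X \<union> L \<union> K)"
abbreviation "E2 \<equiv> restrict_edges E (X \<union> L \<union> M)"
abbreviation "R i \<equiv> remain E X V i"
abbreviation "R1 i \<equiv> remain E1 X (X \<union> L \<union> K) i"
abbreviation "R2 i \<equiv> remain E2 (X \<union> L) (X \<union> L \<union> M) i"

lemma adj_K_mem: "v \<in> K \<Longrightarrow> adj E u v \<Longrightarrow> u \<in> X \<union> L \<union> K"
  using adj_edges_mem[OF E_edges] no_KM_edge adj_commute by blast

lemma adj_M_mem: "v \<in> M \<Longrightarrow> adj E u v \<Longrightarrow> u \<in> X \<union> L \<union> M"
  using adj_edges_mem[OF E_edges] no_KM_edge by blast

lemma E_eq_Un: "E = E1 \<union> E2"
proof
  show "E \<subseteq> E1 \<union> E2"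
  proof
    fix e assume e: "e \<in> E"
    then obtain u v where uv: "e = {u, v}" "adj E u v" "u \<in> V" "v \<in> V"
      using E_edges unfolding edges_def adj_def by blast
    then have "u \<in> X \<union> L \<union> K \<and> v \<in> X \<union> L \<union> K \<or> u \<in> X \<union> L \<union> M \<and> v \<in> X \<union> L \<union> M"
      using adj_K_mem adj_commute by blast
    then show "e \<in> E1 \<union> E2" using e uv unfolding restrict_edges_def by auto
  qed
qed (auto simp: restrict_edges_def)

lemma E1_edges: "E1 \<subseteq> edges (X \<union> L \<union> K)"
proof -
  have "V \<inter> (X \<union> L \<union> K) = X \<union> L \<union> K" by blast
  then show ?thesis using restrict_edges_subset_edges[OF E_edges, of "X \<union> L \<union> K"] by simp
qed

lemma E2_edges: "E2 \<subseteq> edges (X \<union> L \<union> M)"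
proof -
  have "V \<inter> (X \<union> L \<union> M) = X \<union> L \<union> M" by blast
  then show ?thesis using restrict_edges_subset_edges[OF E_edges, of "X \<union> L \<union> M"] by simp
qed

text \<open>As long as \<open>L\<close> survives on both sides, evaporating the whole graph is the same as evaporating
  the two sides separately, because a vertex of \<open>K\<close> or \<open>M\<close> sees only its own side.\<close>
lemma remain_eq_Un: "L \<subseteq> R i \<Longrightarrow> L \<subseteq> R1 i \<Longrightarrow> R i = R1 i \<union> R2 i"
proof (induction i)
  case (Suc i)
  have L_i: "L \<subseteq> R i" "L \<subseteq> R1 i" using Suc.prems by auto
  have R1: "X \<union> L \<subseteq> R1 i" "R1 i \<subseteq> X \<union> L \<union> K"
    using L_i exception_subset_remain[of X "X \<union> L \<union> K" E1 i] remain_subset by auto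
  have R2: "X \<union> L \<subseteq> R2 i" "R2 i \<subseteq> X \<union> L \<union> M"
    using exception_subset_remain[of "X \<union> L" "X \<union> L \<union> M" E2 i] remain_subset by auto
  have RK: "R i \<inter> (X \<union> L \<union> K) = R1 i" and RM: "R i \<inter> (X \<union> L \<union> M) = R2 i"
    unfolding Suc.IH[OF L_i] using R1 R2 disj_K disj_M disj_KM by auto
  show ?case
  proof (rule set_eqI)
    fix v
    consider "v \<in> X \<union> L" | "v \<in> K" | "v \<in> M" | "v \<notin> V" by blast
    then show "v \<in> R (Suc i) \<longleftrightarrow> v \<in> R1 (Suc i) \<union> R2 (Suc i)"
    proof cases
      case 1
      then have "v \<in> R (Suc i)" "v \<in> R1 (Suc i)"
        using Suc.prems exception_subset_remain[of X V E "Suc i"]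
          exception_subset_remain[of X "X \<union> L \<union> K" E1 "Suc i"] by auto
      then show ?thesis by blast
    next
      case 2
      have "v \<notin> R2 (Suc i)" using 2 remain_subset disj_K disj_KM by blast
      moreover have "v \<in> R (Suc i) \<longleftrightarrow> v \<in> R1 (Suc i)"
        by (rule remain_Suc_restrict_edges[OF _ _ _ adj_K_mem[OF 2] RK]) (use 2 disj_K in auto)
      ultimately show ?thesis by blast
    next
      case 3
      have "v \<notin> R1 (Suc i)" using 3 remain_subset disj_M disj_KM by blast
      moreover have "v \<in> R (Suc i) \<longleftrightarrow> v \<in> R2 (Suc i)"
        by (rule remain_Suc_restrict_edges[OF _ _ _ adj_M_mem[OF 3] RM]) (use 3 disj_M in auto)
      ultimately show ?thesis by blast
    qed (use remain_subset in blast)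
  qed
qed auto

lemma remain_K_side_iff:
  assumes "L \<subseteq> R i" and "L \<subseteq> R1 i" and "a \<in> X \<union> L \<union> K"
  shows "a \<in> R i \<longleftrightarrow> a \<in> R1 i"
proof -
  have "R2 i \<subseteq> X \<union> L \<union> M" "X \<union> L \<subseteq> R1 i"
    using remain_subset exception_subset_remain[of X "X \<union> L \<union> K" E1 i] assms(2) by auto
  then show ?thesis using remain_eq_Un[OF assms(1,2)] assms(3) disj_K disj_KM by blast
qed

text \<open>A vertex of \<open>L\<close> that is not simplicial at time \<open>t - 2\<close> is witnessed by two non-adjacent
  neighbours outside \<open>M\<close>; they survive in \<open>E1\<close> up to time \<open>t - 2\<close> as well.\<close>
lemma L_remains_in_E1:
  assumes "2 \<le> t" and L_R: "\<And>i. i \<le> t - 1 \<Longrightarrow> L \<subseteq> R i" and R_M: "R (t - 2) \<inter> M = {}"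
  shows "i \<le> t - 1 \<Longrightarrow> L \<subseteq> R1 i"
proof (induction i)
  case (Suc i)
  have IH: "L \<subseteq> R1 i" and L_Ri: "L \<subseteq> R i" using Suc L_R by simp_all
  show ?case
  proof
    fix v assume v: "v \<in> L"
    have "Suc (t - 2) = t - 1" using \<open>2 \<le> t\<close> by simp
    then have "v \<in> R (Suc (t - 2))" using L_R[of "t - 1"] v by auto
    then have "v \<in> R (t - 2)" "\<not> simplicial E (R (t - 2)) v" using v disj_XL by auto
    then obtain a b where ab: "a \<in> R (t - 2)" "b \<in> R (t - 2)" "adj E a v" "adj E b v" "a \<noteq> b"
        "\<not> adj E a b"
      using not_simplicial_iff[of v "R (t - 2)" E] by blast
    have "a \<in> X \<union> L \<union> K" "b \<in> X \<union> L \<union> K" using ab R_M remain_subset by blast+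
    moreover have "R (t - 2) \<subseteq> R i" using remain_antimono Suc.prems by simp
    ultimately have "a \<in> R1 i" "b \<in> R1 i" using remain_K_side_iff[OF L_Ri IH] ab by blast+
    moreover have "adj E1 a v" "adj E1 b v" "\<not> adj E1 a b"
      using ab \<open>a \<in> X \<union> L \<union> K\<close> \<open>b \<in> X \<union> L \<union> K\<close> v by (auto simp: adj_restrict_edges)
    ultimately have "\<not> simplicial E1 (R1 i) v"
      using not_simplicial_iff[of v "R1 i" E1] IH v ab(5) by blast
    then show "v \<in> R1 (Suc i)" using IH v disj_XL by auto
  qed
qed auto

lemma L_remains_in_E:
  assumes L_R1: "\<And>i. i \<le> t - 1 \<Longrightarrow> L \<subseteq> R1 i"
  shows "i \<le> t - 1 \<Longrightarrow> L \<subseteq> R i"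
proof (induction i)
  case (Suc i)
  have IH: "L \<subseteq> R i" and L_R1i: "L \<subseteq> R1 i" using Suc L_R1 by simp_all
  show ?case
  proof
    fix v assume v: "v \<in> L"
    have "v \<in> R1 (Suc i)" using L_R1[OF Suc.prems] v by blast
    then have "v \<in> R1 i" "\<not> simplicial E1 (R1 i) v" using v disj_XL by auto
    then obtain a b where ab: "a \<in> R1 i" "b \<in> R1 i" "adj E1 a v" "adj E1 b v" "a \<noteq> b"
        "\<not> adj E1 a b"
      using not_simplicial_iff[of v "R1 i" E1] by blast
    have "a \<in> X \<union> L \<union> K" "b \<in> X \<union> L \<union> K" using ab remain_subset by blast+
    then have "a \<in> R i" "b \<in> R i" using remain_K_side_iff[OF IH L_R1i] ab by blast+
    moreover have "adj E a v" "adj E b v" "\<not> adj E a b"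
      using ab \<open>a \<in> X \<union> L \<union> K\<close> \<open>b \<in> X \<union> L \<union> K\<close> by (auto simp: adj_restrict_edges)
    ultimately have "\<not> simplicial E (R i) v"
      using not_simplicial_iff[of v "R i" E] IH v ab(5) by blast
    then show "v \<in> R (Suc i)" using IH v disj_XL by auto
  qed
qed auto

lemma component_K: "v \<in> K \<Longrightarrow> component E (K \<union> M) v = component E1 K v"
proof -
  assume v: "v \<in> K"
  have "component E (K \<union> M) v = component E K v"
    by (rule component_separated[OF v]) (use no_KM_edge in auto)
  also have "\<dots> = component E1 K v" by (rule component_cong) (auto simp: adj_restrict_edges)
  finally show ?thesis .
qed

lemma component_M: "v \<in> M \<Longrightarrow> component E (K \<union> M) v = component E2 M v"
proof -
  assume v: "v \<in> M"
  have "component E (M \<union> K) v = component E M v"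
    by (rule component_separated[OF v]) (use no_KM_edge adj_commute in blast)+
  also have "\<dots> = component E2 M v" by (rule component_cong) (auto simp: adj_restrict_edges)
  finally show ?thesis by (simp add: Un_commute)
qed

lemma components_K_M: "components E (K \<union> M) = components E1 K \<union> components E2 M"
  unfolding components_def image_Un using component_K component_M by simp

lemma component_K_attached:
  assumes "w \<in> K" and "\<exists>u\<in>component E (K \<union> M) w. \<exists>s\<in>S. adj E u s" and "S \<subseteq> X \<union> L"
  shows "\<exists>u\<in>component E1 K w. \<exists>s\<in>S. adj E1 u s"
  using assms component_K[OF assms(1)] component_subset[of E1 K w]
  by (fastforce simp: adj_restrict_edges)

lemma component_M_attached:
  assumes "w \<in> M" and "\<exists>u\<in>component E (K \<union> M) w. \<exists>s\<in>S. adj E u s" and "S \<subseteq> X \<union> L"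
  shows "\<exists>u\<in>component E2 M w. \<exists>s\<in>S. adj E2 u s"
  using assms component_M[OF assms(1)] component_subset[of E2 M w]
  by (fastforce simp: adj_restrict_edges)

lemma remain_of_f_graph:
  assumes "2 \<le> t" and E: "E \<in> f_graphs \<omega> t X L V" and R_M: "R (t - 2) \<inter> M = {}"
  shows "\<And>i. i \<le> t - 1 \<Longrightarrow> L \<subseteq> R i \<and> L \<subseteq> R1 i"
    and "R1 (t - 1) = X \<union> L" and "R2 (t - 2) = X \<union> L"
proof -
  have "R (t - 1) = X \<union> L"
    using E evap_time_last_steps[of E X V t L] \<open>2 \<le> t\<close> unfolding f_graphs_def by auto
  then have L_R: "\<And>i. i \<le> t - 1 \<Longrightarrow> L \<subseteq> R i" using remain_antimono by blast
  have L_R1: "\<And>i. i \<le> t - 1 \<Longrightarrow> L \<subseteq> R1 i" using L_remains_in_E1[OF \<open>2 \<le> t\<close> L_R R_M] .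
  show "\<And>i. i \<le> t - 1 \<Longrightarrow> L \<subseteq> R i \<and> L \<subseteq> R1 i" using L_R L_R1 by blast
  show "R1 (t - 1) = X \<union> L"
    using remain_eq_Un[OF L_R L_R1] \<open>R (t - 1) = X \<union> L\<close> L_R1[of "t - 1"]
      exception_subset_remain[of X "X \<union> L \<union> K" E1 "t - 1"] by auto
  show "R2 (t - 2) = X \<union> L"
    using remain_eq_Un[OF L_R L_R1, of "t - 2"] R_M remain_subset[of E2 "X \<union> L" "X \<union> L \<union> M" "t - 2"]
      exception_subset_remain[of "X \<union> L" "X \<union> L \<union> M" E2 "t - 2"] by auto
qed

lemma components_attached_to_L:
  assumes "connected_on E (V - X)" and "L \<noteq> {}" and "C \<in> components E (K \<union> M)"
  shows "\<exists>u\<in>C. \<exists>s\<in>L. adj E u s"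
proof -
  have "V - X = L \<union> (K \<union> M)" "L \<union> (K \<union> M) - (K \<union> M) = L" using disj_XL disj_K disj_M by auto
  then show ?thesis using component_has_exit_edge[of E "L \<union> (K \<union> M)" "K \<union> M" C] assms by auto
qed

lemma late_K_component_evaporates:
  assumes "2 \<le> t" and E: "E \<in> f_graphs \<omega> t X L V" and R_M: "R (t - 2) \<inter> M = {}"
    and C: "C \<in> components E1 K" and late: "C \<inter> R (t - 2) \<noteq> {}"
  shows "set_evap_time E1 X (X \<union> L \<union> K) C (t - 1)"
proof -
  note R = remain_of_f_graph[OF assms(1,2) R_M]
  have CK: "C \<subseteq> K" using components_nonempty_subset[OF C] by blast
  obtain u where u: "u \<in> C" "u \<in> R (t - 2)" using late by blast
  have "u \<in> R1 (t - 2)" using remain_K_side_iff[of "t - 2" u] R(1)[of "t - 2"] u CK by auto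
  moreover have "u \<notin> R1 (t - 1)" using R(2) u CK disj_K by blast
  moreover have "t - 1 - 1 = t - 2" by simp
  ultimately have "u \<in> layer E1 X (X \<union> L \<union> K) (t - 1) \<inter> C"
    using u unfolding layer_def by (metis Diff_iff IntI)
  moreover have "layer E1 X (X \<union> L \<union> K) j \<inter> C = {}" if "t - 1 < j" for j
  proof -
    have "t - 1 \<le> j - 1" using that by simp
    then have "layer E1 X (X \<union> L \<union> K) j \<subseteq> R1 (t - 1)"
      using remain_antimono unfolding layer_def by blast
    then show ?thesis using R(2) CK disj_K by blast
  qed
  ultimately show ?thesis unfolding set_evap_time_def using \<open>2 \<le> t\<close> by auto
qed

lemma restrict_K_in_ftilde_graphs:
  assumes "2 \<le> t" and E: "E \<in> f_graphs \<omega> t X L V" and "L \<noteq> {}" and "K \<noteq> {}"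
    and R_M: "R (t - 2) \<inter> M = {}" and late: "\<And>C. C \<in> components E1 K \<Longrightarrow> C \<inter> R (t - 2) \<noteq> {}"
  shows "E1 \<in> ftilde_graphs \<omega> t X L (X \<union> L \<union> K)"
proof -
  note R = remain_of_f_graph[OF assms(1,2) R_M]
  have cl1: "is_clique E1 (X \<union> L)" by (rule is_clique_restrict_edges[OF clique_XL]) blast
  have ev1: "evap_time E1 X (X \<union> L \<union> K) t" "layer E1 X (X \<union> L \<union> K) t = L"
    using evap_time_if_clique_remains[OF R(2) _ disj_XL \<open>L \<noteq> {}\<close> cl1] \<open>2 \<le> t\<close> by auto
  have attached: "\<exists>u\<in>component E1 K w. \<exists>s\<in>L. adj E1 u s" if "w \<in> K" for w
    using components_attached_to_L[of "component E (K \<union> M) w"] E \<open>L \<noteq> {}\<close> that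
      component_in_components[of w "K \<union> M" E] component_K_attached[OF that, of L]
    unfolding f_graphs_def by blast
  have "connected_on E1 (X \<union> L \<union> K)"
    by (rule connected_on_clique_attach[of "X \<union> L" _ _ K]) (use cl1 \<open>L \<noteq> {}\<close> attached in blast)+
  moreover have "connected_on E1 ((X \<union> L \<union> K) - X)"
  proof -
    have "connected_on E1 (L \<union> K)"
      by (rule connected_on_clique_attach[of L _ _ K])
        (use is_clique_subset[OF cl1] \<open>L \<noteq> {}\<close> attached in blast)+
    moreover have "(X \<union> L \<union> K) - X = L \<union> K" using disj_XL disj_K by blast
    ultimately show ?thesis by simp
  qed
  moreover have "chordal_on E1 (X \<union> L \<union> K)"
    by (rule chordal_on_induced_subgraph[of E V]) (use E in \<open>auto simp: f_graphs_def adj_restrict_edges\<close>)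
  moreover have "colorable_on \<omega> E1 (X \<union> L \<union> K)"
    by (rule colorable_on_subgraph[of \<omega> E V]) (use E in \<open>auto simp: f_graphs_def adj_restrict_edges\<close>)
  moreover have "is_clique E1 X" using is_clique_subset[OF cl1] by blast
  moreover have "set_evap_time E1 X (X \<union> L \<union> K) C (t - 1)" if "C \<in> components E1 K" for C
    using late_K_component_evaporates[OF assms(1,2) R_M that late[OF that]] .
  moreover have "(X \<union> L \<union> K) - (X \<union> L) = K" "X \<union> L \<subset> X \<union> L \<union> K"
    using disj_K \<open>K \<noteq> {}\<close> by blast+
  ultimately show ?thesis
    unfolding ftilde_graphs_def f_graphs_def using E1_edges cl1 ev1 by auto
qed

lemma restrict_M_in_g_graphs:
  assumes "2 \<le> t" and E: "E \<in> f_graphs \<omega> t X L V" and "L \<noteq> {}" and R_M: "R (t - 2) \<inter> M = {}"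
  shows "E2 \<in> g_graphs \<omega> (t - 2) (X \<union> L) X (X \<union> L \<union> M)"
proof -
  note R = remain_of_f_graph[OF assms(1,2) R_M]
  have cl2: "is_clique E2 (X \<union> L)" by (rule is_clique_restrict_edges[OF clique_XL]) blast
  have attached: "\<exists>u\<in>component E2 M w. \<exists>s\<in>L. adj E2 u s" if "w \<in> M" for w
    using components_attached_to_L[of "component E (K \<union> M) w"] E \<open>L \<noteq> {}\<close> that
      component_in_components[of w "K \<union> M" E] component_M_attached[OF that, of L]
    unfolding f_graphs_def by blast
  have "connected_on E2 (X \<union> L \<union> M)"
    by (rule connected_on_clique_attach[of "X \<union> L" _ _ M]) (use cl2 \<open>L \<noteq> {}\<close> attached in blast)+
  moreover have "chordal_on E2 (X \<union> L \<union> M)"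
    by (rule chordal_on_induced_subgraph[of E V]) (use E in \<open>auto simp: f_graphs_def adj_restrict_edges\<close>)
  moreover have "colorable_on \<omega> E2 (X \<union> L \<union> M)"
    by (rule colorable_on_subgraph[of \<omega> E V]) (use E in \<open>auto simp: f_graphs_def adj_restrict_edges\<close>)
  moreover have "\<exists>u\<in>C. \<exists>w\<in>(X \<union> L) - X. adj E2 u w" if C: "C \<in> components E2 M" for C
  proof -
    obtain w where "w \<in> M" "C = component E2 M w" using C unfolding components_def by blast
    then show ?thesis using attached disj_XL by blast
  qed
  moreover have "(X \<union> L \<union> M) - (X \<union> L) = M" using disj_M by blast
  ultimately show ?thesis
    unfolding g_graphs_def using E2_edges cl2 evap_time_exists[OF R(3)] by auto
qed

lemma remain_of_parts:
  assumes "2 \<le> t" and E1: "E1 \<in> ftilde_graphs \<omega> t X L (X \<union> L \<union> K)"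
    and E2: "E2 \<in> g_graphs \<omega> (t - 2) (X \<union> L) X (X \<union> L \<union> M)"
  shows "\<And>i. i \<le> t - 1 \<Longrightarrow> L \<subseteq> R i \<and> L \<subseteq> R1 i"
    and "R (t - 1) = X \<union> L" and "R (t - 2) \<inter> M = {}"
proof -
  have "evap_time E1 X (X \<union> L \<union> K) t" "layer E1 X (X \<union> L \<union> K) t = L"
    using E1 unfolding ftilde_graphs_def f_graphs_def by blast+
  then have "R1 (t - 1) = X \<union> L" using evap_time_last_steps \<open>2 \<le> t\<close> by simp
  then have L_R1: "\<And>i. i \<le> t - 1 \<Longrightarrow> L \<subseteq> R1 i" using remain_antimono by blast
  have L_R: "\<And>i. i \<le> t - 1 \<Longrightarrow> L \<subseteq> R i" using L_remains_in_E[OF L_R1] .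
  show "\<And>i. i \<le> t - 1 \<Longrightarrow> L \<subseteq> R i \<and> L \<subseteq> R1 i" using L_R L_R1 by blast
  obtain t' where "t' \<le> t - 2" "evap_time E2 (X \<union> L) (X \<union> L \<union> M) t'"
    using E2 unfolding g_graphs_def by blast
  then have "R2 t' = X \<union> L" unfolding evap_time_def by blast
  then have R2: "R2 i = X \<union> L" if "t - 2 \<le> i" for i
  proof -
    have "R2 i \<subseteq> R2 t'" using remain_antimono[of t' i] that \<open>t' \<le> t - 2\<close> by simp
    moreover have "X \<union> L \<subseteq> R2 i" using exception_subset_remain[of "X \<union> L" "X \<union> L \<union> M" E2 i] by blast
    ultimately show ?thesis using \<open>R2 t' = X \<union> L\<close> by blast
  qed
  have "R (t - 1) = R1 (t - 1) \<union> R2 (t - 1)" using remain_eq_Un L_R L_R1 by simp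
  then show "R (t - 1) = X \<union> L" using R2[of "t - 1"] \<open>R1 (t - 1) = X \<union> L\<close> by simp
  show "R (t - 2) \<inter> M = {}"
  proof -
    have "R (t - 2) = R1 (t - 2) \<union> R2 (t - 2)" using remain_eq_Un L_R L_R1 by simp
    moreover have "R1 (t - 2) \<subseteq> X \<union> L \<union> K" by (rule remain_subset)
    ultimately show ?thesis using R2[of "t - 2"] disj_M disj_KM by auto
  qed
qed

lemma late_K_components_of_parts:
  assumes "2 \<le> t" and E1: "E1 \<in> ftilde_graphs \<omega> t X L (X \<union> L \<union> K)"
    and E2: "E2 \<in> g_graphs \<omega> (t - 2) (X \<union> L) X (X \<union> L \<union> M)"
    and C: "C \<in> components E1 K"
  shows "C \<inter> R (t - 2) \<noteq> {}"
proof -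
  have "(X \<union> L \<union> K) - (X \<union> L) = K" using disj_K by blast
  then have "set_evap_time E1 X (X \<union> L \<union> K) C (t - 1)"
    using E1 C unfolding ftilde_graphs_def by auto
  then obtain u where u: "u \<in> R1 (t - 1 - 1)" "u \<in> C"
    unfolding set_evap_time_def layer_def by blast
  moreover have "t - 1 - 1 = t - 2" by simp
  ultimately have "u \<in> R (t - 2)"
    using remain_K_side_iff[of "t - 2" u] remain_of_parts(1)[OF assms(1-3), of "t - 2"]
      components_nonempty_subset[OF C] by auto
  then show ?thesis using u by blast
qed

lemma components_attached_of_parts:
  assumes E1: "E1 \<in> ftilde_graphs \<omega> t X L (X \<union> L \<union> K)"
    and E2: "E2 \<in> g_graphs \<omega> (t - 2) (X \<union> L) X (X \<union> L \<union> M)" and "L \<noteq> {}" and w: "w \<in> K \<union> M"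
  shows "\<exists>u\<in>component E (K \<union> M) w. \<exists>s\<in>L. adj E u s"
proof (cases "w \<in> K")
  case True
  have "L \<union> K - K = L" "(X \<union> L \<union> K) - X = L \<union> K" using disj_XL disj_K by blast+
  moreover have "connected_on E1 ((X \<union> L \<union> K) - X)"
    using E1 unfolding ftilde_graphs_def f_graphs_def by blast
  ultimately obtain u s where "u \<in> component E1 K w" "s \<in> L" "adj E1 u s"
    using component_has_exit_edge[of E1 "L \<union> K" K "component E1 K w"] \<open>L \<noteq> {}\<close>
      component_in_components[OF True] by auto
  then show ?thesis using component_K[OF True] by (auto simp: adj_restrict_edges)
next
  case False
  then have "w \<in> M" using w by blast
  have "(X \<union> L \<union> M) - (X \<union> L) = M" "(X \<union> L) - X = L" using disj_XL disj_M by blast+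
  then obtain u s where "u \<in> component E2 M w" "s \<in> L" "adj E2 u s"
    using E2 component_in_components[OF \<open>w \<in> M\<close>] unfolding g_graphs_def by force
  then show ?thesis using component_M[OF \<open>w \<in> M\<close>] by (auto simp: adj_restrict_edges)
qed

lemma Un_in_f_graphs:
  assumes "2 \<le> t" and E1: "E1 \<in> ftilde_graphs \<omega> t X L (X \<union> L \<union> K)"
    and E2: "E2 \<in> g_graphs \<omega> (t - 2) (X \<union> L) X (X \<union> L \<union> M)" and "L \<noteq> {}"
  shows "E \<in> f_graphs \<omega> t X L V"
proof -
  have F1: "chordal_on E1 (X \<union> L \<union> K)" "colorable_on \<omega> E1 (X \<union> L \<union> K)"
    using E1 unfolding ftilde_graphs_def f_graphs_def by blast+
  have G2: "chordal_on E2 (X \<union> L \<union> M)" "colorable_on \<omega> E2 (X \<union> L \<union> M)"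
    using E2 unfolding g_graphs_def by blast+
  have cl: "is_clique E1 (X \<union> L)" "is_clique E2 (X \<union> L)"
    using is_clique_restrict_edges[OF clique_XL] by blast+
  have sides: "(X \<union> L \<union> K) \<inter> (X \<union> L \<union> M) = X \<union> L" "(X \<union> L \<union> K) \<union> (X \<union> L \<union> M) = V"
    using disj_K disj_M disj_KM by blast+
  have attached: "\<exists>u\<in>component E (K \<union> M) w. \<exists>s\<in>S. adj E u s"
    if "w \<in> K \<union> M" "L \<subseteq> S" for w S
    using components_attached_of_parts[OF E1 E2 \<open>L \<noteq> {}\<close> that(1)] that(2) by blast
  have "connected_on E V"
    by (rule connected_on_clique_attach[of "X \<union> L" _ _ "K \<union> M"])
      (use clique_XL \<open>L \<noteq> {}\<close> attached in blast)+
  moreover have "connected_on E (V - X)"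
  proof -
    have "connected_on E (L \<union> (K \<union> M))"
      by (rule connected_on_clique_attach[of L _ _ "K \<union> M"])
        (use is_clique_subset[OF clique_XL] \<open>L \<noteq> {}\<close> attached in blast)+
    moreover have "V - X = L \<union> (K \<union> M)" using disj_XL disj_K disj_M by blast
    ultimately show ?thesis by simp
  qed
  moreover have "chordal_on E V"
    using chordal_on_clique_sum[OF F1(1) G2(1) E1_edges E2_edges] cl sides E_eq_Un by simp
  moreover have "colorable_on \<omega> E V"
    using colorable_on_clique_sum[OF F1(2) G2(2) E1_edges E2_edges] cl sides E_eq_Un by simp
  moreover have "evap_time E X V t" "layer E X V t = L"
    using evap_time_if_clique_remains[OF remain_of_parts(2)[OF assms(1-3)] _ disj_XL \<open>L \<noteq> {}\<close>
        clique_XL] \<open>2 \<le> t\<close> by auto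
  ultimately show ?thesis
    unfolding f_graphs_def using E_edges clique_XL is_clique_subset[OF clique_XL] by blast
qed

lemma late_part_eq_K:
  assumes "2 \<le> t" and E1: "E1 \<in> ftilde_graphs \<omega> t X L (X \<union> L \<union> K)"
    and E2: "E2 \<in> g_graphs \<omega> (t - 2) (X \<union> L) X (X \<union> L \<union> M)"
  shows "late_part t X L (K \<union> M) E = K"
proof (rule set_eqI)
  fix u
  have V: "X \<union> L \<union> (K \<union> M) = V" by blast
  consider "u \<in> K" | "u \<in> M" | "u \<notin> K \<union> M" by blast
  then show "u \<in> late_part t X L (K \<union> M) E \<longleftrightarrow> u \<in> K"
  proof cases
    case 1
    then have "component E (K \<union> M) u \<in> components E1 K"
      using component_K component_in_components by metis
    then show ?thesis using late_K_components_of_parts[OF assms] 1 V mem_late_part_iff by auto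
  next
    case 2
    then have "component E (K \<union> M) u \<subseteq> M" using component_M component_subset by metis
    then show ?thesis using remain_of_parts(3)[OF assms] V 2 disj_KM mem_late_part_iff by auto
  qed (use late_part_subset in blast)
qed

end

lemma clique_cut_Un:
  assumes "X \<inter> L = {}" and "K \<inter> (X \<union> L) = {}" and "M \<inter> (X \<union> L) = {}" and "K \<inter> M = {}"
    and E1: "E1 \<subseteq> edges (X \<union> L \<union> K)" and E2: "E2 \<subseteq> edges (X \<union> L \<union> M)"
    and "is_clique E1 (X \<union> L)"
  shows "clique_cut (E1 \<union> E2) X L K M"
proof
  have "edges (X \<union> L \<union> K) \<subseteq> edges (X \<union> L \<union> K \<union> M)" "edges (X \<union> L \<union> M) \<subseteq> edges (X \<union> L \<union> K \<union> M)"
    by (rule edges_mono, blast)+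
  then show "E1 \<union> E2 \<subseteq> edges (X \<union> L \<union> K \<union> M)" using E1 E2 by blast
  show "\<not> adj (E1 \<union> E2) u w" if "u \<in> K" "w \<in> M" for u w
    using that assms(2-4) adj_edges_mem[OF E1, of u w] adj_edges_mem[OF E2, of u w]
    unfolding adj_Un by blast
  show "is_clique (E1 \<union> E2) (X \<union> L)" by (rule is_clique_Un_edges) fact
qed (use assms in blast)+

subsection \<open>Decomposing the graphs counted by \<open>f\<close>\<close>

locale f_decomposition =
  fixes t :: nat and X L U :: "nat set"
  assumes two_le_t: "2 \<le> t" and disj_XL: "X \<inter> L = {}" and disj_U: "U \<inter> (X \<union> L) = {}"
    and L_nonempty: "L \<noteq> {}"
begin

lemma late_part_nonempty:
  assumes E: "E \<in> f_graphs \<omega> t X L (X \<union> L \<union> U)"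
  shows "late_part t X L U E \<noteq> {}"
proof
  assume empty: "late_part t X L U E = {}"
  let ?R = "remain E X (X \<union> L \<union> U)"
  have "?R (t - 1) = X \<union> L"
    using E evap_time_last_steps[of E X "X \<union> L \<union> U" t L] two_le_t unfolding f_graphs_def by auto
  moreover have "?R (t - 2) \<subseteq> X \<union> L"
    using remain_disjoint_early_part[of E X L U t] empty remain_subset by blast
  moreover have "?R (t - 1) \<subseteq> ?R (t - 2)" by (rule remain_antimono) simp
  ultimately have R: "?R (t - 2) = X \<union> L" by blast
  obtain v where "v \<in> L" using L_nonempty by blast
  have "is_clique E (X \<union> L)" using E unfolding f_graphs_def by blast
  then have "simplicial E (?R (t - 2)) v" using R simplicial_if_clique \<open>v \<in> L\<close> by simp
  moreover have "Suc (t - 2) = t - 1" using two_le_t by simp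
  ultimately have "v \<notin> ?R (t - 1)" using \<open>v \<in> L\<close> disj_XL by (metis remain_Suc_iff disjoint_iff)
  then show False using \<open>?R (t - 1) = X \<union> L\<close> \<open>v \<in> L\<close> by blast
qed

lemma decompose_f_graph:
  assumes E: "E \<in> f_graphs \<omega> t X L (X \<union> L \<union> U)"
  defines "K \<equiv> late_part t X L U E"
  shows "K \<subseteq> U" and "K \<noteq> {}"
    and "restrict_edges E (X \<union> L \<union> K) \<in> ftilde_graphs \<omega> t X L (X \<union> L \<union> K)"
    and "restrict_edges E (X \<union> L \<union> (U - K)) \<in> g_graphs \<omega> (t - 2) (X \<union> L) X (X \<union> L \<union> (U - K))"
    and "E = restrict_edges E (X \<union> L \<union> K) \<union> restrict_edges E (X \<union> L \<union> (U - K))"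
proof -
  show KU: "K \<subseteq> U" unfolding K_def by (rule late_part_subset)
  show "K \<noteq> {}" unfolding K_def by (rule late_part_nonempty[OF E])
  have V: "X \<union> L \<union> K \<union> (U - K) = X \<union> L \<union> U" and KM: "K \<union> (U - K) = U" using KU by blast+
  interpret S: clique_cut E X L K "U - K"
  proof
    show "E \<subseteq> edges (X \<union> L \<union> K \<union> (U - K))" using E V unfolding f_graphs_def by simp
    show "\<And>u w. u \<in> K \<Longrightarrow> w \<in> U - K \<Longrightarrow> \<not> adj E u w" unfolding K_def by (rule late_part_no_edge)
    show "is_clique E (X \<union> L)" using E unfolding f_graphs_def by blast
  qed (use disj_XL disj_U KU in blast)+
  have E': "E \<in> f_graphs \<omega> t X L S.V" using E V by simp
  have R_M: "S.R (t - 2) \<inter> (U - K) = {}"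
    using remain_disjoint_early_part[of E X L U t] V unfolding K_def by simp
  have "C \<inter> S.R (t - 2) \<noteq> {}" if "C \<in> components S.E1 K" for C
    using late_part_components[of C E U t X L] that S.components_K_M KM V
      components_nonempty_subset[of C S.E1 K]
    unfolding K_def by auto
  then show "restrict_edges E (X \<union> L \<union> K) \<in> ftilde_graphs \<omega> t X L (X \<union> L \<union> K)"
    using S.restrict_K_in_ftilde_graphs[OF two_le_t E' L_nonempty \<open>K \<noteq> {}\<close> R_M] by blast
  show "restrict_edges E (X \<union> L \<union> (U - K)) \<in> g_graphs \<omega> (t - 2) (X \<union> L) X (X \<union> L \<union> (U - K))"
    by (rule S.restrict_M_in_g_graphs[OF two_le_t E' L_nonempty R_M])
  show "E = restrict_edges E (X \<union> L \<union> K) \<union> restrict_edges E (X \<union> L \<union> (U - K))"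
    by (rule S.E_eq_Un)
qed

lemma compose_f_graph:
  assumes KU: "K \<subseteq> U"
    and E1: "E1 \<in> ftilde_graphs \<omega> t X L (X \<union> L \<union> K)"
    and E2: "E2 \<in> g_graphs \<omega> (t - 2) (X \<union> L) X (X \<union> L \<union> (U - K))"
  shows "E1 \<union> E2 \<in> f_graphs \<omega> t X L (X \<union> L \<union> U)" and "late_part t X L U (E1 \<union> E2) = K"
    and "restrict_edges (E1 \<union> E2) (X \<union> L \<union> K) = E1"
    and "restrict_edges (E1 \<union> E2) (X \<union> L \<union> (U - K)) = E2"
proof -
  let ?E = "E1 \<union> E2"
  have V: "X \<union> L \<union> K \<union> (U - K) = X \<union> L \<union> U" and KM: "K \<union> (U - K) = U" using KU by blast+
  have E1_edges: "E1 \<subseteq> edges (X \<union> L \<union> K)" and cl1: "is_clique E1 (X \<union> L)"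
    using E1 unfolding ftilde_graphs_def f_graphs_def by blast+
  have E2_edges: "E2 \<subseteq> edges (X \<union> L \<union> (U - K))" and cl2: "is_clique E2 (X \<union> L)"
    using E2 unfolding g_graphs_def by blast+
  have sides: "(X \<union> L \<union> K) \<inter> (X \<union> L \<union> (U - K)) = X \<union> L" using disj_U KU by blast
  show r1: "restrict_edges ?E (X \<union> L \<union> K) = E1"
    using restrict_edges_Un_clique_sum[OF E1_edges E2_edges] cl1 sides by simp
  show r2: "restrict_edges ?E (X \<union> L \<union> (U - K)) = E2"
    using restrict_edges_Un_clique_sum[OF E2_edges E1_edges] cl2 sides by (simp add: Un_commute Int_commute)
  interpret S: clique_cut ?E X L K "U - K"
    by (rule clique_cut_Un[OF _ _ _ _ E1_edges E2_edges cl1]) (use disj_XL disj_U KU in blast)+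
  have E1': "S.E1 \<in> ftilde_graphs \<omega> t X L (X \<union> L \<union> K)" using E1 r1 by simp
  have E2': "S.E2 \<in> g_graphs \<omega> (t - 2) (X \<union> L) X (X \<union> L \<union> (U - K))" using E2 r2 by simp
  show "?E \<in> f_graphs \<omega> t X L (X \<union> L \<union> U)"
    using S.Un_in_f_graphs[OF two_le_t E1' E2' L_nonempty] V by simp
  show "late_part t X L U ?E = K" using S.late_part_eq_K[OF two_le_t E1' E2'] KM by simp
qed

lemma card_f_graphs_eq_sum:
  assumes "finite (X \<union> L)" and "finite U"
  shows "card (f_graphs \<omega> t X L (X \<union> L \<union> U)) =
    (\<Sum>K | K \<subseteq> U \<and> K \<noteq> {}. card (ftilde_graphs \<omega> t X L (X \<union> L \<union> K))
       * card (g_graphs \<omega> (t - 2) (X \<union> L) X (X \<union> L \<union> (U - K))))"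
proof -
  let ?P = "{K. K \<subseteq> U \<and> K \<noteq> {}}"
  let ?pairs = "\<lambda>K. ftilde_graphs \<omega> t X L (X \<union> L \<union> K) \<times> g_graphs \<omega> (t - 2) (X \<union> L) X (X \<union> L \<union> (U - K))"
  let ?split = "\<lambda>E. (late_part t X L U E, restrict_edges E (X \<union> L \<union> late_part t X L U E),
      restrict_edges E (X \<union> L \<union> (U - late_part t X L U E)))"
  have "bij_betw (\<lambda>(K, E1, E2). E1 \<union> E2) (Sigma ?P ?pairs) (f_graphs \<omega> t X L (X \<union> L \<union> U))"
  proof (rule bij_betw_byWitness[where f' = ?split])
    show "\<forall>p\<in>Sigma ?P ?pairs. ?split (case p of (K, E1, E2) \<Rightarrow> E1 \<union> E2) = p"
      using compose_f_graph(2-4) by auto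
    show "\<forall>E\<in>f_graphs \<omega> t X L (X \<union> L \<union> U). (case ?split E of (K, E1, E2) \<Rightarrow> E1 \<union> E2) = E"
      using decompose_f_graph(5) by auto
    show "(\<lambda>(K, E1, E2). E1 \<union> E2) ` Sigma ?P ?pairs \<subseteq> f_graphs \<omega> t X L (X \<union> L \<union> U)"
      using compose_f_graph(1) by auto
    show "?split ` f_graphs \<omega> t X L (X \<union> L \<union> U) \<subseteq> Sigma ?P ?pairs"
      using decompose_f_graph(1-4) by auto
  qed
  then have "card (f_graphs \<omega> t X L (X \<union> L \<union> U)) = card (Sigma ?P ?pairs)"
    by (simp add: bij_betw_same_card)
  also have "\<dots> = (\<Sum>K\<in>?P. card (?pairs K))"
  proof (rule card_SigmaI)
    show "finite ?P" using assms(2) by simp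
    show "\<forall>K\<in>?P. finite (?pairs K)"
    proof
      fix K assume "K \<in> ?P"
      then have "finite K" using assms(2) finite_subset by blast
      then show "finite (?pairs K)" using assms by (simp add: finite_ftilde_graphs finite_g_graphs)
    qed
  qed
  finally show ?thesis by (simp add: card_cartesian_product)
qed

end

lemma sum_nonempty_subsets_by_card:
  fixes f :: "nat \<Rightarrow> nat"
  assumes "finite U"
  shows "(\<Sum>K | K \<subseteq> U \<and> K \<noteq> {}. f (card K)) = (\<Sum>j = 1..card U. (card U choose j) * f j)"
proof -
  let ?P = "{K. K \<subseteq> U \<and> K \<noteq> {}}"
  have "finite ?P" using assms by simp
  moreover have "card ` ?P \<subseteq> {1..card U}"
  proof
    fix j assume "j \<in> card ` ?P"
    then obtain K where "K \<subseteq> U" "K \<noteq> {}" "j = card K" by blast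
    moreover have "finite K" using \<open>K \<subseteq> U\<close> assms finite_subset by blast
    ultimately show "j \<in> {1..card U}" using assms by (simp add: card_mono Suc_le_eq card_gt_0_iff)
  qed
  ultimately have "(\<Sum>K\<in>?P. f (card K)) = (\<Sum>j = 1..card U. \<Sum>K | K \<in> ?P \<and> card K = j. f (card K))"
    using sum.group[of ?P "{1..card U}" card "\<lambda>K. f (card K)"] by simp
  also have "\<dots> = (\<Sum>j = 1..card U. (card U choose j) * f j)"
  proof (rule sum.cong[OF refl])
    fix j assume "j \<in> {1..card U}"
    then have "{K. K \<in> ?P \<and> card K = j} = {K. K \<subseteq> U \<and> card K = j}" by auto
    then show "(\<Sum>K | K \<in> ?P \<and> card K = j. f (card K)) = (card U choose j) * f j"
      using n_subsets[OF assms] by simp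
  qed
  finally show ?thesis .
qed

lemma card_parts_relabel:
  assumes "K \<subseteq> {x+l+1..x+l+k}"
  shows "card (ftilde_graphs \<omega> t {1..x} {x+1..x+l} ({1..x} \<union> {x+1..x+l} \<union> K))
      * card (g_graphs \<omega> s ({1..x} \<union> {x+1..x+l}) {1..x}
          ({1..x} \<union> {x+1..x+l} \<union> ({x+l+1..x+l+k} - K)))
    = ftilde_count \<omega> t x l (card K) * g_count \<omega> s (x + l) (k - card K) x"
proof -
  have "finite K" using assms finite_subset by blast
  moreover have "card ({x+l+1..x+l+k} - K) = k - card K"
    using card_Diff_subset[OF \<open>finite K\<close> assms] by simp
  moreover have "K' \<inter> {1..x+l} = {}" if "K' \<subseteq> {x+l+1..x+l+k}" for K'
    using that by auto
  ultimately show ?thesis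
    using card_ftilde_graphs_relabel[of K x l \<omega> t] card_g_graphs_relabel[of "{x+l+1..x+l+k} - K" x l \<omega> s]
      assms by auto
qed

theorem lemma3p2:
  fixes \<omega> t x l k :: nat
  assumes "\<omega> \<ge> 1" and "t \<ge> 2" and "l \<ge> 1"
  shows "f_count \<omega> t x l k =
    (\<Sum>k' = 1..k. (k choose k') * ftilde_count \<omega> t x l k' * g_count \<omega> (t - 2) (x + l) (k - k') x)"
proof -
  \<comment> \<open>The argument does not use \<open>\<omega> \<ge> 1\<close>.\<close>
  define X L U where "X = {1..x}" and "L = {x+1..x+l}" and "U = {x+l+1..x+l+k}"
  interpret f_decomposition t X L U
    by unfold_locales (use assms in \<open>auto simp: X_def L_def U_def\<close>)
  have V: "X \<union> L \<union> U = {1..x+l+k}" and "card U = k" and "finite U"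
    by (auto simp: X_def L_def U_def)
  have "f_count \<omega> t x l k = card (f_graphs \<omega> t X L (X \<union> L \<union> U))"
    unfolding f_count_eq_card V by (simp add: X_def L_def)
  also have "\<dots> = (\<Sum>K | K \<subseteq> U \<and> K \<noteq> {}. card (ftilde_graphs \<omega> t X L (X \<union> L \<union> K))
      * card (g_graphs \<omega> (t - 2) (X \<union> L) X (X \<union> L \<union> (U - K))))"
    by (rule card_f_graphs_eq_sum) (simp_all add: X_def L_def \<open>finite U\<close>)
  also have "\<dots> = (\<Sum>K | K \<subseteq> U \<and> K \<noteq> {}. ftilde_count \<omega> t x l (card K)
      * g_count \<omega> (t - 2) (x + l) (k - card K) x)"
    by (rule sum.cong[OF refl], unfold X_def L_def U_def, rule card_parts_relabel) auto
  also have "\<dots> = (\<Sum>k' = 1..k. (k choose k') * ftilde_count \<omega> t x l k' * g_count \<omega> (t - 2) (x + l) (k - k') x)"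
    using sum_nonempty_subsets_by_card[OF \<open>finite U\<close>] \<open>card U = k\<close> by (simp add: mult.assoc)
  finally show ?thesis .
qed

end
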